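(* Let $e=uv$ be an edge of a graph $G$. Then $\operatorname{reg}(\mathcal{D}(G;e))=\operatorname{reg}(G/e)+1$.
   Context: $\mathcal{D}(G;e)$ is the double edge subdivision: delete the edge $uv$ and add two new vertices $a,b$ with edges $ua,ab,bv$. For an edge $e=xy$, $G/e$ is obtained from $G-\{x,y\}$ by adding a new vertex adjacent to every vertex of $(N_G(x)\cup N_G(y))\setminus\{x,y\}$. $\operatorname{reg}(G)=\max\{j\ge0:\widetilde H_{j-1}(\operatorname{Ind}(G[S]);\Bbbk)\neq0\text{ for some }S\subseteq V(G)\}$ over a field $\Bbbk$, $\operatorname{Ind}$ the independence complex. *)

theory Defs
  imports Main
begin

type_synonym 'a graph = "'a set \<times> 'a set set"

definition is_graph :: "'a graph \<Rightarrow> bool" where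
  "is_graph G \<longleftrightarrow> finite (fst G) \<and>
     (\<forall>e\<in>snd G. \<exists>x y. x \<noteq> y \<and> e = {x, y} \<and> x \<in> fst G \<and> y \<in> fst G)"

definition nbhd :: "'a graph \<Rightarrow> 'a \<Rightarrow> 'a set" where
  "nbhd G x = {z. {x, z} \<in> snd G}"

definition dsub :: "'a graph \<Rightarrow> 'a \<Rightarrow> 'a \<Rightarrow> 'a \<Rightarrow> 'a \<Rightarrow> 'a graph" where
  "dsub G u v a b = (fst G \<union> {a, b}, (snd G - {{u, v}}) \<union> {{u, a}, {a, b}, {b, v}})"

definition contract :: "'a graph \<Rightarrow> 'a \<Rightarrow> 'a \<Rightarrow> 'a \<Rightarrow> 'a graph" where
  "contract G x y w = ((fst G - {x, y}) \<union> {w},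
     {e \<in> snd G. x \<notin> e \<and> y \<notin> e} \<union>
     {{w, z} | z. z \<in> (nbhd G x \<union> nbhd G y) - {x, y}})"

text \<open>Independence complex of the induced subgraph G[S] (faces as vertex sets, including the empty face).\<close>
definition Ind_induced :: "'a graph \<Rightarrow> 'a set \<Rightarrow> 'a set set" where
  "Ind_induced G S = {T. T \<subseteq> S \<and> (\<forall>e\<in>snd G. e \<subseteq> S \<longrightarrow> \<not> e \<subseteq> T)}"

text \<open>Simplicial chains with coefficients in a field 'k: functions on faces; faces oriented
  by the linear order of vertices. Faces with j vertices are (j-1)-dimensional; the empty face
  has dimension -1 (augmented complex, giving reduced homology).\<close>
definition faces :: "'a set set \<Rightarrow> nat \<Rightarrow> 'a set set" where
  "faces K j = {\<sigma> \<in> K. card \<sigma> = j}"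

definition osign :: "'a::linorder \<Rightarrow> 'a set \<Rightarrow> 'k::field" where
  "osign x \<sigma> = (-1) ^ card {y \<in> \<sigma>. y < x}"

definition bdry :: "'a::linorder set set \<Rightarrow> ('a set \<Rightarrow> 'k::field) \<Rightarrow> 'a set \<Rightarrow> 'k" where
  "bdry K c \<tau> = (\<Sum>x\<in>{x. x \<notin> \<tau> \<and> insert x \<tau> \<in> K}. osign x (insert x \<tau>) * c (insert x \<tau>))"

text \<open>red_homology_nonzero k K j  iff  the reduced homology group of K in dimension j-1
  (over the field 'k) is nonzero.\<close>
definition red_homology_nonzero :: "'k::field itself \<Rightarrow> 'a::linorder set set \<Rightarrow> nat \<Rightarrow> bool" where
  "red_homology_nonzero _ K j \<longleftrightarrow>
     (\<exists>z :: 'a set \<Rightarrow> 'k. (\<forall>\<sigma>. z \<sigma> \<noteq> 0 \<longrightarrow> \<sigma> \<in> faces K j) \<and> (\<forall>\<tau>. bdry K z \<tau> = 0) \<and>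
        \<not> (\<exists>c :: 'a set \<Rightarrow> 'k. (\<forall>\<sigma>. c \<sigma> \<noteq> 0 \<longrightarrow> \<sigma> \<in> faces K (Suc j)) \<and> bdry K c = z))"

definition reg :: "'k::field itself \<Rightarrow> 'a::linorder graph \<Rightarrow> nat" where
  "reg k G = Max {j. \<exists>S \<subseteq> fst G. red_homology_nonzero k (Ind_induced G S) j}"

end

theory Submission
  imports Defs "HOL-Library.Product_Lexorder"
begin

text \<open>Both graphs are induced subgraphs of one graph M on V + {a, b, w}: D(G;e) on V + {a, b} and
  G/e on V - {u, v} + {w}.  For the independence complex on S and a vertex x of S, the deletion is
  the complex on S - {x} and the link the complex on S - N[x].  If the link is acyclic, S and
  S - {x} have the same homology; if the deletion is acyclic, the homology of S is that of the link
  shifted up by one degree.  A complex whose vertex set contains an isolated vertex is a cone, hence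
  acyclic.  These moves show that X + {u, v, a, b} has the homology of X + {w} shifted by one, so
  reg D(G;e) \<ge> reg G/e + 1, and a case analysis on which of u, v, a, b lie in S bounds the
  homology of every induced subgraph of D(G;e) by reg G/e + 1.\<close>

section \<open>Simplicial chains and boundaries\<close>

text \<open>The boundary in the full simplex on U.  Unlike bdry it does not depend on the complex, so a
  chain of a subcomplex has the same boundary in the subcomplex as in the complex.\<close>
definition boundary :: "'a::linorder set \<Rightarrow> ('a set \<Rightarrow> 'k::field) \<Rightarrow> 'a set \<Rightarrow> 'k" where
  "boundary U c \<tau> = (\<Sum>x\<in>U - \<tau>. osign x (insert x \<tau>) * c (insert x \<tau>))"

definition cone_chain :: "'a::linorder \<Rightarrow> ('a set \<Rightarrow> 'k::field) \<Rightarrow> 'a set \<Rightarrow> 'k" where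
  "cone_chain x c \<sigma> = (if x \<in> \<sigma> then osign x \<sigma> * c (\<sigma> - {x}) else 0)"

definition supported_on :: "('a set \<Rightarrow> 'k::zero) \<Rightarrow> 'a set set \<Rightarrow> bool" where
  "supported_on c A \<longleftrightarrow> (\<forall>\<sigma>. c \<sigma> \<noteq> 0 \<longrightarrow> \<sigma> \<in> A)"

lemma osign_square: "osign x \<sigma> * (osign x \<sigma> :: 'k::field) = 1"
  unfolding osign_def by (simp add: power_mult_distrib[symmetric])

lemma supported_on_mono: "supported_on c A \<Longrightarrow> A \<subseteq> B \<Longrightarrow> supported_on c B"
  by (auto simp: supported_on_def)

lemma supported_on_add:
  "supported_on c A \<Longrightarrow> supported_on d A \<Longrightarrow> supported_on (\<lambda>\<sigma>. c \<sigma> + (d \<sigma> :: 'k::field)) A"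
  unfolding supported_on_def by (metis add.right_neutral add_0)

lemma supported_on_diff:
  "supported_on c A \<Longrightarrow> supported_on d A \<Longrightarrow> supported_on (\<lambda>\<sigma>. c \<sigma> - (d \<sigma> :: 'k::field)) A"
  unfolding supported_on_def by (metis diff_zero diff_self)

lemma supported_on_uminus: "supported_on c A \<Longrightarrow> supported_on (\<lambda>\<sigma>. - (c \<sigma> :: 'k::field)) A"
  unfolding supported_on_def by auto

lemma bdry_eq_boundary:
  assumes "finite U" "K \<subseteq> Pow U" "supported_on c K"
  shows "bdry K c = boundary U c"
proof
  fix \<tau>
  have "{x. x \<notin> \<tau> \<and> insert x \<tau> \<in> K} \<subseteq> U - \<tau>" using assms(2) by auto
  then show "bdry K c \<tau> = boundary U c \<tau>"
    unfolding bdry_def boundary_def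
    by (intro sum.mono_neutral_left) (use assms in \<open>auto simp: supported_on_def\<close>)
qed

lemma boundary_add: "boundary U (\<lambda>\<sigma>. c \<sigma> + d \<sigma>) \<tau> = boundary U c \<tau> + boundary U d \<tau>"
  by (simp add: boundary_def distrib_left sum.distrib)

lemma boundary_diff: "boundary U (\<lambda>\<sigma>. c \<sigma> - d \<sigma>) \<tau> = boundary U c \<tau> - boundary U d \<tau>"
  by (simp add: boundary_def right_diff_distrib sum_subtractf)

lemma boundary_uminus: "boundary U (\<lambda>\<sigma>. - c \<sigma>) \<tau> = - boundary U c \<tau>"
  by (simp add: boundary_def sum_negf)

lemma boundary_zero: "boundary U (\<lambda>_. 0) = (\<lambda>_. 0)"
  by (simp add: boundary_def fun_eq_iff)

lemma boundary_eq_0_if_avoids: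
  assumes "\<And>\<sigma>. c \<sigma> \<noteq> 0 \<Longrightarrow> x \<notin> \<sigma>" "x \<in> \<tau>"
  shows "boundary U c \<tau> = 0"
  unfolding boundary_def using assms by (intro sum.neutral) auto

lemma osign_insert_swap:
  assumes "finite \<tau>" "x \<in> \<tau>" "y \<notin> \<tau>"
  shows "osign y (insert y \<tau>) * (osign x (insert y \<tau>) :: 'k::field)
         = - osign x \<tau> * osign y (insert y (\<tau> - {x}))"
proof -
  let ?\<rho> = "\<tau> - {x}"
  have fin: "finite ?\<rho>" using assms by auto
  have "{z \<in> insert y \<tau>. z < y} = (if x < y then insert x {z \<in> ?\<rho>. z < y} else {z \<in> ?\<rho>. z < y})"
    and "{z \<in> insert y \<tau>. z < x} = (if y < x then insert y {z \<in> ?\<rho>. z < x} else {z \<in> ?\<rho>. z < x})"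
    using assms by auto
  then have "card {z \<in> insert y \<tau>. z < y} = card {z \<in> ?\<rho>. z < y} + (if x < y then 1 else 0)"
    and "card {z \<in> insert y \<tau>. z < x} = card {z \<in> ?\<rho>. z < x} + (if y < x then 1 else 0)"
    using fin assms by simp_all
  moreover have "{z \<in> \<tau>. z < x} = {z \<in> ?\<rho>. z < x}" "{z \<in> insert y ?\<rho>. z < y} = {z \<in> ?\<rho>. z < y}"
    by auto
  moreover have "x \<noteq> y" using assms by auto
  ultimately show ?thesis
    unfolding osign_def by (cases "x < y") (auto simp: power_add not_less_iff_gr_or_eq)
qed

lemma boundary_Diff_vertex:
  assumes "finite U" "x \<in> U" "x \<in> \<tau>" "c \<tau> = 0"
  shows "boundary U c (\<tau> - {x}) = (\<Sum>y\<in>U - \<tau>. osign y (insert y (\<tau> - {x})) * c (insert y (\<tau> - {x})))"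
proof -
  have "boundary U c (\<tau> - {x}) = osign x (insert x (\<tau> - {x})) * c (insert x (\<tau> - {x}))
      + (\<Sum>y\<in>(U - (\<tau> - {x})) - {x}. osign y (insert y (\<tau> - {x})) * c (insert y (\<tau> - {x})))"
    unfolding boundary_def using assms(1,2) by (subst sum.remove[of _ x]) auto
  also have "insert x (\<tau> - {x}) = \<tau>" using assms(3) by auto
  also have "(U - (\<tau> - {x})) - {x} = U - \<tau>" using assms(3) by auto
  finally show ?thesis using assms(4) by simp
qed

lemma boundary_cone_chain_vertex:
  fixes c :: "'a::linorder set \<Rightarrow> 'k::field"
  assumes U: "finite U" "x \<in> U" and \<tau>: "x \<in> \<tau>" "\<tau> \<subseteq> U" and c\<tau>: "c \<tau> = 0"
  shows "boundary U (cone_chain x c) \<tau> = - (osign x \<tau> * boundary U c (\<tau> - {x}))"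
proof -
  let ?\<rho> = "\<tau> - {x}"
  have "finite \<tau>" using \<tau>(2) U finite_subset by blast
  have "boundary U (cone_chain x c) \<tau>
      = (\<Sum>y\<in>U - \<tau>. osign y (insert y \<tau>) * (osign x (insert y \<tau>) * c (insert y ?\<rho>)))"
    unfolding boundary_def cone_chain_def using \<tau>(1) by (intro sum.cong) (auto simp: insert_Diff_if)
  also have "\<dots> = (\<Sum>y\<in>U - \<tau>. - (osign x \<tau> * (osign y (insert y ?\<rho>) * c (insert y ?\<rho>))))"
  proof (intro sum.cong refl)
    fix y assume "y \<in> U - \<tau>"
    then have swap: "osign y (insert y \<tau>) * osign x (insert y \<tau>) = - osign x \<tau> * osign y (insert y ?\<rho>)"
      using osign_insert_swap[OF \<open>finite \<tau>\<close> \<tau>(1)] by blast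
    show "osign y (insert y \<tau>) * (osign x (insert y \<tau>) * c (insert y ?\<rho>))
        = - (osign x \<tau> * (osign y (insert y ?\<rho>) * c (insert y ?\<rho>)))"
      unfolding mult.assoc[symmetric] swap by simp
  qed
  also have "\<dots> = - (osign x \<tau> * boundary U c ?\<rho>)"
    unfolding boundary_Diff_vertex[where c = c, OF U \<tau>(1) c\<tau>] by (simp add: sum_distrib_left sum_negf)
  finally show ?thesis .
qed

lemma boundary_cone_chain:
  fixes c :: "'a::linorder set \<Rightarrow> 'k::field"
  assumes U: "finite U" "x \<in> U" and c: "\<And>\<sigma>. c \<sigma> \<noteq> 0 \<Longrightarrow> \<sigma> \<subseteq> U \<and> x \<notin> \<sigma>"
  shows "boundary U (cone_chain x c) \<tau> = c \<tau> - cone_chain x (boundary U c) \<tau>"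
proof (cases "x \<in> \<tau>")
  case False
  have "boundary U (cone_chain x c) \<tau> = osign x (insert x \<tau>) * cone_chain x c (insert x \<tau>)
        + (\<Sum>y\<in>(U - \<tau>) - {x}. osign y (insert y \<tau>) * cone_chain x c (insert y \<tau>))"
    unfolding boundary_def using U False by (subst sum.remove[of _ x]) auto
  also have "(\<Sum>y\<in>(U - \<tau>) - {x}. osign y (insert y \<tau>) * cone_chain x c (insert y \<tau>)) = 0"
    using False by (intro sum.neutral) (auto simp: cone_chain_def)
  also have "osign x (insert x \<tau>) * cone_chain x c (insert x \<tau>) = c \<tau>"
    using False by (simp add: cone_chain_def osign_square mult.assoc[symmetric])
  finally show ?thesis using False by (simp add: cone_chain_def[of x "boundary U c"])
next
  case True
  have c\<tau>: "c \<tau> = 0" using c True by blast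
  show ?thesis
  proof (cases "\<tau> \<subseteq> U")
    case False
    have "c (insert y \<tau> - {x}) = 0" "c (insert y (\<tau> - {x})) = 0" for y
      using c[of "insert y \<tau> - {x}"] c[of "insert y (\<tau> - {x})"] False True U(2) by auto
    then have "boundary U (cone_chain x c) \<tau> = 0" "boundary U c (\<tau> - {x}) = 0"
      unfolding boundary_def cone_chain_def by (auto intro!: sum.neutral)
    then show ?thesis using True c\<tau> by (simp add: cone_chain_def)
  next
    case True': True
    then show ?thesis
      using boundary_cone_chain_vertex[where c = c, OF U True True' c\<tau>] True c\<tau> by (simp add: cone_chain_def)
  qed
qed

definition del_part :: "'a \<Rightarrow> ('a set \<Rightarrow> 'k::field) \<Rightarrow> 'a set \<Rightarrow> 'k" where
  "del_part x c \<sigma> = (if x \<in> \<sigma> then 0 else c \<sigma>)"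

definition link_part :: "'a::linorder \<Rightarrow> ('a set \<Rightarrow> 'k::field) \<Rightarrow> 'a set \<Rightarrow> 'k" where
  "link_part x c \<sigma> = (if x \<in> \<sigma> then 0 else osign x (insert x \<sigma>) * c (insert x \<sigma>))"

lemma chain_decompose: "c \<sigma> = del_part x c \<sigma> + cone_chain x (link_part x c) \<sigma>"
proof (cases "x \<in> \<sigma>")
  case True
  then have "insert x (\<sigma> - {x}) = \<sigma>" by auto
  then show ?thesis
    using True by (simp add: del_part_def link_part_def cone_chain_def osign_square mult.assoc[symmetric])
qed (simp add: del_part_def cone_chain_def)

lemma boundary_del_part_vertex: "x \<in> \<tau> \<Longrightarrow> boundary U (del_part x c) \<tau> = 0"
  unfolding boundary_def del_part_def by (intro sum.neutral) auto

lemma boundary_link_part_vertex: "x \<in> \<tau> \<Longrightarrow> boundary U (link_part x c) \<tau> = 0"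
  unfolding boundary_def link_part_def by (intro sum.neutral) auto

lemma
  fixes c :: "'a::linorder set \<Rightarrow> 'k::field"
  assumes U: "finite U" "x \<in> U" and c: "\<And>\<sigma>. c \<sigma> \<noteq> 0 \<Longrightarrow> \<sigma> \<subseteq> U" and "x \<notin> \<tau>"
  shows boundary_del_part: "boundary U (del_part x c) \<tau> = boundary U c \<tau> - link_part x c \<tau>"
    and boundary_link_part:
      "boundary U (link_part x c) \<tau> = - (osign x (insert x \<tau>) * boundary U c (insert x \<tau>))"
proof -
  have split: "boundary U c \<rho> = boundary U (del_part x c) \<rho> + link_part x c \<rho>
      - cone_chain x (boundary U (link_part x c)) \<rho>" for \<rho>
  proof -
    have "c = (\<lambda>\<sigma>. del_part x c \<sigma> + cone_chain x (link_part x c) \<sigma>)"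
      by (rule ext) (rule chain_decompose)
    then have "boundary U c \<rho> = boundary U (\<lambda>\<sigma>. del_part x c \<sigma> + cone_chain x (link_part x c) \<sigma>) \<rho>"
      by (rule arg_cong)
    also have "\<dots> = boundary U (del_part x c) \<rho> + (link_part x c \<rho> - cone_chain x (boundary U (link_part x c)) \<rho>)"
      unfolding boundary_add
      by (subst boundary_cone_chain[OF U]) (use c in \<open>auto simp: link_part_def split: if_splits\<close>)
    finally show ?thesis by simp
  qed
  show "boundary U (del_part x c) \<tau> = boundary U c \<tau> - link_part x c \<tau>"
    using split[of \<tau>] \<open>x \<notin> \<tau>\<close> by (simp add: cone_chain_def)
  have "boundary U c (insert x \<tau>) = - (osign x (insert x \<tau>) * boundary U (link_part x c) \<tau>)"
    using split[of "insert x \<tau>"] \<open>x \<notin> \<tau>\<close> boundary_del_part_vertex[of x "insert x \<tau>"]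
    by (simp add: cone_chain_def link_part_def)
  then show "boundary U (link_part x c) \<tau> = - (osign x (insert x \<tau>) * boundary U c (insert x \<tau>))"
    by (simp add: osign_square mult.assoc[symmetric])
qed

section \<open>Deletion and link\<close>

definition red_homology_nonzero_on :: "'k::field itself \<Rightarrow> 'a::linorder set \<Rightarrow> 'a set set \<Rightarrow> nat \<Rightarrow> bool" where
  "red_homology_nonzero_on _ U K j \<longleftrightarrow>
     (\<exists>z :: 'a set \<Rightarrow> 'k. supported_on z (faces K j) \<and> boundary U z = (\<lambda>_. 0) \<and>
        \<not> (\<exists>c :: 'a set \<Rightarrow> 'k. supported_on c (faces K (Suc j)) \<and> boundary U c = z))"

lemma red_homology_nonzero_iff_on:
  assumes "finite U" "K \<subseteq> Pow U"
  shows "red_homology_nonzero k K j \<longleftrightarrow> red_homology_nonzero_on k U K j"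
proof -
  have "bdry K c = boundary U c" if "supported_on c (faces K n)" for c :: "'a set \<Rightarrow> 'b" and n
    using bdry_eq_boundary[OF assms] that by (auto simp: supported_on_def faces_def)
  then show ?thesis
    unfolding red_homology_nonzero_def red_homology_nonzero_on_def supported_on_def[symmetric]
    by (metis (no_types, lifting))
qed

lemma cycle_is_boundary_if_not_nonzero:
  fixes k :: "'k::field itself" and z :: "'a::linorder set \<Rightarrow> 'k"
  assumes "\<not> red_homology_nonzero_on k U K j" "supported_on z (faces K j)" "boundary U z = (\<lambda>_. 0)"
  obtains c :: "'a set \<Rightarrow> 'k" where "supported_on c (faces K (Suc j))" "boundary U c = z"
  using assms unfolding red_homology_nonzero_on_def by blast

definition deletion :: "'a set set \<Rightarrow> 'a \<Rightarrow> 'a set set" where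
  "deletion K x = {\<sigma> \<in> K. x \<notin> \<sigma>}"

definition link :: "'a set set \<Rightarrow> 'a \<Rightarrow> 'a set set" where
  "link K x = {\<sigma>. x \<notin> \<sigma> \<and> insert x \<sigma> \<in> K}"

locale complex_with_vertex =
  fixes U :: "'a::linorder set" and K :: "'a set set" and x :: 'a
  assumes finite_U: "finite U" and x_in_U: "x \<in> U" and K_Pow: "K \<subseteq> Pow U"
    and downward_closed: "\<And>\<sigma> \<tau>. \<sigma> \<in> K \<Longrightarrow> \<tau> \<subseteq> \<sigma> \<Longrightarrow> \<tau> \<in> K"
begin

lemma faces_link_subset: "faces (link K x) n \<subseteq> faces (deletion K x) n"
  using downward_closed by (auto simp: faces_def link_def deletion_def)

lemma faces_deletion_subset: "faces (deletion K x) n \<subseteq> faces K n"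
  by (auto simp: faces_def deletion_def)

lemma supported_subset_U: "supported_on c (faces K n) \<Longrightarrow> c \<sigma> \<noteq> 0 \<Longrightarrow> \<sigma> \<subseteq> U"
  using K_Pow by (auto simp: supported_on_def faces_def)

lemma supported_link_avoids: "supported_on c (faces (link K x) n) \<Longrightarrow> c \<sigma> \<noteq> 0 \<Longrightarrow> \<sigma> \<subseteq> U \<and> x \<notin> \<sigma>"
  using K_Pow by (auto simp: supported_on_def faces_def link_def)

lemma supported_deletion_avoids: "supported_on c (faces (deletion K x) n) \<Longrightarrow> c \<sigma> \<noteq> 0 \<Longrightarrow> x \<notin> \<sigma>"
  by (auto simp: supported_on_def faces_def deletion_def)

lemma supported_del_part: "supported_on c (faces K n) \<Longrightarrow> supported_on (del_part x c) (faces (deletion K x) n)"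
  by (auto simp: supported_on_def del_part_def faces_def deletion_def)

lemma supported_link_part:
  assumes "supported_on c (faces K n)"
  shows "supported_on (link_part x c) {\<sigma> \<in> link K x. Suc (card \<sigma>) = n}"
  unfolding supported_on_def
proof (intro allI impI)
  fix \<sigma> assume "link_part x c \<sigma> \<noteq> 0"
  then have "x \<notin> \<sigma>" "insert x \<sigma> \<in> faces K n" using assms by (auto simp: supported_on_def link_part_def split: if_splits)
  moreover have "finite \<sigma>" using calculation K_Pow finite_U by (auto simp: faces_def intro: finite_subset)
  ultimately show "\<sigma> \<in> {\<sigma> \<in> link K x. Suc (card \<sigma>) = n}" by (auto simp: faces_def link_def)
qed

lemma supported_link_part_Suc:
  "supported_on c (faces K (Suc n)) \<Longrightarrow> supported_on (link_part x c) (faces (link K x) n)"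
  using supported_link_part by (fastforce simp: supported_on_def faces_def)

lemma supported_cone_chain:
  assumes "supported_on c (faces (link K x) n)"
  shows "supported_on (cone_chain x c) (faces K (Suc n))"
  unfolding supported_on_def
proof (intro allI impI)
  fix \<sigma> assume "cone_chain x c \<sigma> \<noteq> 0"
  then have "x \<in> \<sigma>" "\<sigma> - {x} \<in> faces (link K x) n" using assms by (auto simp: cone_chain_def supported_on_def split: if_splits)
  moreover have "finite \<sigma>" using calculation K_Pow finite_U by (auto simp: faces_def link_def intro: finite_subset)
  ultimately show "\<sigma> \<in> faces K (Suc n)"
    by (auto simp: faces_def link_def insert_absorb card_Diff_singleton)
      (metis Suc_pred card_gt_0_iff empty_iff)
qed

lemma boundary_link_part_cycle:
  assumes "supported_on z (faces K n)" "boundary U z = (\<lambda>_. 0)"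
  shows "boundary U (link_part x z) = (\<lambda>_. 0)"
proof
  fix \<tau>
  show "boundary U (link_part x z) \<tau> = 0"
  proof (cases "x \<in> \<tau>")
    case True
    then show ?thesis by (rule boundary_link_part_vertex)
  next
    case False
    then show ?thesis
      using boundary_link_part[where c = z, OF finite_U x_in_U supported_subset_U[OF assms(1)]] assms(2)
      by simp
  qed
qed

lemma boundary_del_part_cycle:
  assumes "supported_on z (faces K n)" "boundary U z = (\<lambda>_. 0)" "x \<notin> \<tau>"
  shows "boundary U (del_part x z) \<tau> = - link_part x z \<tau>"
  using boundary_del_part[where c = z, OF finite_U x_in_U supported_subset_U[OF assms(1)] assms(3)] assms(2)
  by simp

lemma red_homology_nonzero_deletion_if_link_part_bounds:
  fixes k :: "'k::field itself" and z :: "'a set \<Rightarrow> 'k"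
  assumes z: "supported_on z (faces K j)" "boundary U z = (\<lambda>_. 0)"
    and z_not_boundary: "\<not> (\<exists>c. supported_on c (faces K (Suc j)) \<and> boundary U c = z)"
    and c1: "supported_on c1 (faces (link K x) j)" "boundary U c1 = link_part x z"
  shows "red_homology_nonzero_on k U (deletion K x) j"
proof -
  define z' where "z' \<sigma> = del_part x z \<sigma> + c1 \<sigma>" for \<sigma>
  have "supported_on z' (faces (deletion K x) j)"
    unfolding z'_def
    by (intro supported_on_add supported_del_part z supported_on_mono[OF c1(1) faces_link_subset])
  moreover have "boundary U z' = (\<lambda>_. 0)"
  proof
    fix \<tau>
    show "boundary U z' \<tau> = 0"
    proof (cases "x \<in> \<tau>")
      case True
      have "x \<notin> \<sigma>" if "z' \<sigma> \<noteq> 0" for \<sigma>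
        using that supported_link_avoids[OF c1(1), of \<sigma>] by (auto simp: z'_def del_part_def)
      then show ?thesis using True by (rule boundary_eq_0_if_avoids)
    next
      case False
      then show ?thesis
        unfolding z'_def boundary_add c1(2) using boundary_del_part_cycle[OF z False] by simp
    qed
  qed
  moreover have "\<not> (\<exists>d. supported_on d (faces (deletion K x) (Suc j)) \<and> boundary U d = z')"
  proof
    assume "\<exists>d. supported_on d (faces (deletion K x) (Suc j)) \<and> boundary U d = z'"
    then obtain d where d: "supported_on d (faces (deletion K x) (Suc j))" "boundary U d = z'" by blast
    define c where "c \<sigma> = d \<sigma> - cone_chain x c1 \<sigma>" for \<sigma>
    have "supported_on c (faces K (Suc j))"
      unfolding c_def
      by (intro supported_on_diff supported_on_mono[OF d(1) faces_deletion_subset] supported_cone_chain c1(1))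
    moreover have "boundary U c = z"
    proof
      fix \<tau>
      have "boundary U c \<tau> = z' \<tau> - (c1 \<tau> - cone_chain x (link_part x z) \<tau>)"
        unfolding c_def boundary_diff d(2) c1(2)[symmetric]
        using boundary_cone_chain[where c = c1, OF finite_U x_in_U supported_link_avoids[OF c1(1)]] by simp
      then show "boundary U c \<tau> = z \<tau>"
        using chain_decompose[of z \<tau> x] by (simp add: z'_def)
    qed
    ultimately show False using z_not_boundary by blast
  qed
  ultimately show ?thesis unfolding red_homology_nonzero_on_def by blast
qed

lemma red_homology_nonzero_deletion_or_link:
  fixes k :: "'k::field itself"
  assumes "red_homology_nonzero_on k U K j"
  shows "red_homology_nonzero_on k U (deletion K x) j \<or>
    (\<exists>i. j = Suc i \<and> red_homology_nonzero_on k U (link K x) i)"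
proof -
  obtain z :: "'a set \<Rightarrow> 'k" where z: "supported_on z (faces K j)" "boundary U z = (\<lambda>_. 0)"
    and z_not_boundary: "\<not> (\<exists>c. supported_on c (faces K (Suc j)) \<and> boundary U c = z)"
    using assms unfolding red_homology_nonzero_on_def by blast
  have link_cycle: "boundary U (link_part x z) = (\<lambda>_. 0)" by (rule boundary_link_part_cycle[OF z])
  have "(\<exists>c1. supported_on c1 (faces (link K x) j) \<and> boundary U c1 = link_part x z) \<or>
    (\<exists>i. j = Suc i \<and> red_homology_nonzero_on k U (link K x) i)"
  proof (cases j)
    case 0
    then have "link_part x z = (\<lambda>_. 0)"
      using supported_link_part[OF z(1)] by (auto simp: supported_on_def)
    then show ?thesis by (auto simp: supported_on_def boundary_zero)
  next
    case (Suc i)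
    then show ?thesis
      using supported_link_part_Suc[of z i] z link_cycle
      unfolding red_homology_nonzero_on_def by blast
  qed
  then show ?thesis
    using red_homology_nonzero_deletion_if_link_part_bounds[OF z z_not_boundary] by blast
qed

lemma boundary_in_deletion_if_link_acyclic:
  fixes k :: "'k::field itself" and c :: "'a set \<Rightarrow> 'k"
  assumes link_acyclic: "\<And>i. \<not> red_homology_nonzero_on k U (link K x) i"
    and c: "supported_on c (faces K (Suc j))" and avoids: "\<And>\<sigma>. boundary U c \<sigma> \<noteq> 0 \<Longrightarrow> x \<notin> \<sigma>"
  obtains d where "supported_on d (faces (deletion K x) (Suc j))" "boundary U d = boundary U c"
proof -
  have "boundary U (link_part x c) = (\<lambda>_. 0)"
  proof
    fix \<tau>
    show "boundary U (link_part x c) \<tau> = 0"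
      using boundary_link_part[where c = c, OF finite_U x_in_U supported_subset_U[OF c]]
        boundary_link_part_vertex avoids[of "insert x \<tau>"]
      by (cases "x \<in> \<tau>") auto
  qed
  then obtain e where e: "supported_on e (faces (link K x) (Suc j))" "boundary U e = link_part x c"
    using cycle_is_boundary_if_not_nonzero[OF link_acyclic supported_link_part_Suc[OF c]] by blast
  define d where "d \<sigma> = del_part x c \<sigma> + e \<sigma>" for \<sigma>
  have "supported_on d (faces (deletion K x) (Suc j))"
    unfolding d_def
    by (intro supported_on_add supported_del_part c supported_on_mono[OF e(1) faces_link_subset])
  moreover have "boundary U d = boundary U c"
  proof
    fix \<tau>
    show "boundary U d \<tau> = boundary U c \<tau>"
    proof (cases "x \<in> \<tau>")
      case True
      have "x \<notin> \<sigma>" if "d \<sigma> \<noteq> 0" for \<sigma>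
        using that supported_link_avoids[OF e(1), of \<sigma>] by (auto simp: d_def del_part_def)
      then show ?thesis
        using boundary_eq_0_if_avoids True avoids by metis
    next
      case False
      then show ?thesis
        unfolding d_def boundary_add e(2)
        using boundary_del_part[where c = c, OF finite_U x_in_U supported_subset_U[OF c] False] by simp
    qed
  qed
  ultimately show ?thesis using that by blast
qed

lemma red_homology_nonzero_iff_deletion:
  fixes k :: "'k::field itself"
  assumes link_acyclic: "\<And>i. \<not> red_homology_nonzero_on k U (link K x) i"
  shows "red_homology_nonzero_on k U K j \<longleftrightarrow> red_homology_nonzero_on k U (deletion K x) j"
proof
  assume "red_homology_nonzero_on k U K j"
  then show "red_homology_nonzero_on k U (deletion K x) j"
    using red_homology_nonzero_deletion_or_link link_acyclic by blast
next
  assume "red_homology_nonzero_on k U (deletion K x) j"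
  then obtain z :: "'a set \<Rightarrow> 'k" where z: "supported_on z (faces (deletion K x) j)" "boundary U z = (\<lambda>_. 0)"
    and z_not_boundary: "\<not> (\<exists>d. supported_on d (faces (deletion K x) (Suc j)) \<and> boundary U d = z)"
    unfolding red_homology_nonzero_on_def by blast
  have "\<not> (\<exists>c. supported_on c (faces K (Suc j)) \<and> boundary U c = z)"
  proof
    assume "\<exists>c. supported_on c (faces K (Suc j)) \<and> boundary U c = z"
    then obtain c where c: "supported_on c (faces K (Suc j))" "boundary U c = z" by blast
    then obtain d where "supported_on d (faces (deletion K x) (Suc j))" "boundary U d = z"
      using boundary_in_deletion_if_link_acyclic[OF link_acyclic c(1)] supported_deletion_avoids[OF z(1)]
      by metis
    then show False using z_not_boundary by blast
  qed
  then show "red_homology_nonzero_on k U K j"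
    using z supported_on_mono[OF z(1) faces_deletion_subset]
    unfolding red_homology_nonzero_on_def by blast
qed

lemma cone_minus_filling_not_boundary:
  fixes z c :: "'a set \<Rightarrow> 'k::field"
  assumes z: "supported_on z (faces (link K x) j)"
    and z_not_boundary: "\<not> (\<exists>e. supported_on e (faces (link K x) (Suc j)) \<and> boundary U e = z)"
    and c: "supported_on c (faces (deletion K x) (Suc j))"
  shows "\<not> (\<exists>d. supported_on d (faces K (Suc (Suc j))) \<and> boundary U d = (\<lambda>\<sigma>. cone_chain x z \<sigma> - c \<sigma>))"
proof
  assume "\<exists>d. supported_on d (faces K (Suc (Suc j))) \<and> boundary U d = (\<lambda>\<sigma>. cone_chain x z \<sigma> - c \<sigma>)"
  then obtain d where d: "supported_on d (faces K (Suc (Suc j)))"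
    "boundary U d = (\<lambda>\<sigma>. cone_chain x z \<sigma> - c \<sigma>)" by blast
  have "boundary U (\<lambda>\<sigma>. - link_part x d \<sigma>) = z"
  proof
    fix \<sigma>
    show "boundary U (\<lambda>\<sigma>. - link_part x d \<sigma>) \<sigma> = z \<sigma>"
    proof (cases "x \<in> \<sigma>")
      case True
      then show ?thesis
        using boundary_link_part_vertex[OF True, of U d] supported_link_avoids[OF z, of \<sigma>]
        by (auto simp: boundary_uminus)
    next
      case False
      have "boundary U d (insert x \<sigma>) = osign x (insert x \<sigma>) * z \<sigma>"
        using False supported_deletion_avoids[OF c, of "insert x \<sigma>"] d(2) by (auto simp: cone_chain_def)
      then show ?thesis
        using boundary_link_part[where c = d, OF finite_U x_in_U supported_subset_U[OF d(1)] False]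
        by (simp add: boundary_uminus osign_square mult.assoc[symmetric])
    qed
  qed
  moreover have "supported_on (\<lambda>\<sigma>. - link_part x d \<sigma>) (faces (link K x) (Suc j))"
    by (intro supported_on_uminus supported_link_part_Suc d(1))
  ultimately show False using z_not_boundary by blast
qed

lemma
  fixes k :: "'k::field itself"
  assumes deletion_acyclic: "\<And>i. \<not> red_homology_nonzero_on k U (deletion K x) i"
  shows red_homology_nonzero_Suc_iff_link:
      "red_homology_nonzero_on k U K (Suc j) \<longleftrightarrow> red_homology_nonzero_on k U (link K x) j"
    and not_red_homology_nonzero_0: "\<not> red_homology_nonzero_on k U K 0"
proof -
  show "\<not> red_homology_nonzero_on k U K 0"
    using red_homology_nonzero_deletion_or_link deletion_acyclic by blast
  show "red_homology_nonzero_on k U K (Suc j) \<longleftrightarrow> red_homology_nonzero_on k U (link K x) j"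
  proof
    assume "red_homology_nonzero_on k U K (Suc j)"
    then show "red_homology_nonzero_on k U (link K x) j"
      using red_homology_nonzero_deletion_or_link deletion_acyclic by blast
  next
    assume "red_homology_nonzero_on k U (link K x) j"
    then obtain z :: "'a set \<Rightarrow> 'k" where z: "supported_on z (faces (link K x) j)" "boundary U z = (\<lambda>_. 0)"
      and z_not_boundary: "\<not> (\<exists>c. supported_on c (faces (link K x) (Suc j)) \<and> boundary U c = z)"
      unfolding red_homology_nonzero_on_def by blast
    obtain c where c: "supported_on c (faces (deletion K x) (Suc j))" "boundary U c = z"
      using cycle_is_boundary_if_not_nonzero[OF deletion_acyclic supported_on_mono[OF z(1) faces_link_subset] z(2)]
      by blast
    have boundary_cone: "boundary U (cone_chain x z) \<tau> = z \<tau> - cone_chain x (boundary U z) \<tau>" for \<tau>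
      using boundary_cone_chain[where c = z, OF finite_U x_in_U supported_link_avoids[OF z(1)]] .
    have "supported_on (\<lambda>\<sigma>. cone_chain x z \<sigma> - c \<sigma>) (faces K (Suc j))"
      by (intro supported_on_diff supported_cone_chain z(1) supported_on_mono[OF c(1) faces_deletion_subset])
    moreover have "boundary U (\<lambda>\<sigma>. cone_chain x z \<sigma> - c \<sigma>) = (\<lambda>_. 0)"
      unfolding boundary_diff boundary_cone z(2) c(2) by (simp add: cone_chain_def fun_eq_iff)
    ultimately show "red_homology_nonzero_on k U K (Suc j)"
      using cone_minus_filling_not_boundary[OF z(1) z_not_boundary c(1)]
      unfolding red_homology_nonzero_on_def by blast
  qed
qed

lemma not_red_homology_nonzero_cone:
  assumes cone: "\<And>\<sigma>. \<sigma> \<in> K \<Longrightarrow> insert x \<sigma> \<in> K"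
  shows "\<not> red_homology_nonzero_on k U K j"
proof
  assume "red_homology_nonzero_on k U K j"
  then obtain z :: "'a set \<Rightarrow> 'b" where z: "supported_on z (faces K j)" "boundary U z = (\<lambda>_. 0)"
    and z_not_boundary: "\<not> (\<exists>c. supported_on c (faces K (Suc j)) \<and> boundary U c = z)"
    unfolding red_homology_nonzero_on_def by blast
  have del_link: "supported_on (del_part x z) (faces (link K x) j)"
    using supported_del_part[OF z(1)] cone by (auto simp: supported_on_def faces_def deletion_def link_def)
  have "cone_chain x (boundary U (del_part x z)) \<tau> = - cone_chain x (link_part x z) \<tau>" for \<tau>
    using boundary_del_part_cycle[OF z, of "\<tau> - {x}"] by (simp add: cone_chain_def)
  then have "boundary U (cone_chain x (del_part x z)) = z"
    using boundary_cone_chain[where c = "del_part x z", OF finite_U x_in_U supported_link_avoids[OF del_link]]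
      chain_decompose[of z _ x] by (simp add: fun_eq_iff)
  moreover have "supported_on (cone_chain x (del_part x z)) (faces K (Suc j))"
    by (rule supported_cone_chain[OF del_link])
  ultimately show False using z_not_boundary by blast
qed

end

section \<open>Independence complexes of induced subgraphs\<close>

abbreviation ind_nonzero :: "'k::field itself \<Rightarrow> 'a::linorder graph \<Rightarrow> 'a set \<Rightarrow> nat \<Rightarrow> bool" where
  "ind_nonzero k G S j \<equiv> red_homology_nonzero k (Ind_induced G S) j"

lemma Ind_induced_cong:
  assumes "\<And>e. e \<subseteq> S \<Longrightarrow> e \<in> snd G \<longleftrightarrow> e \<in> snd H"
  shows "Ind_induced G S = Ind_induced H S"
  using assms unfolding Ind_induced_def by blast

lemma is_graph_edge_subset: "is_graph G \<Longrightarrow> e \<in> snd G \<Longrightarrow> e \<subseteq> fst G"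
  unfolding is_graph_def by fastforce

lemma deletion_Ind_induced: "deletion (Ind_induced G S) x = Ind_induced G (S - {x})"
  unfolding deletion_def Ind_induced_def by auto

lemma link_Ind_induced:
  assumes "is_graph G" "x \<in> S"
  shows "link (Ind_induced G S) x = Ind_induced G (S - insert x (nbhd G x))"
proof (intro set_eqI iffI)
  fix \<sigma> assume "\<sigma> \<in> link (Ind_induced G S) x"
  then have \<sigma>: "x \<notin> \<sigma>" "insert x \<sigma> \<subseteq> S" and ind: "\<And>e. e \<in> snd G \<Longrightarrow> e \<subseteq> S \<Longrightarrow> \<not> e \<subseteq> insert x \<sigma>"
    unfolding link_def Ind_induced_def by blast+
  have "y \<notin> nbhd G x" if "y \<in> \<sigma>" for y
    using ind[of "{x, y}"] \<sigma> that by (auto simp: nbhd_def)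
  then show "\<sigma> \<in> Ind_induced G (S - insert x (nbhd G x))"
    using \<sigma> ind unfolding Ind_induced_def by blast
next
  fix \<sigma> assume "\<sigma> \<in> Ind_induced G (S - insert x (nbhd G x))"
  then have \<sigma>: "\<sigma> \<subseteq> S - insert x (nbhd G x)"
    and ind: "\<And>e. e \<in> snd G \<Longrightarrow> e \<subseteq> S - insert x (nbhd G x) \<Longrightarrow> \<not> e \<subseteq> \<sigma>"
    unfolding Ind_induced_def by blast+
  have "\<not> e \<subseteq> insert x \<sigma>" if e: "e \<in> snd G" "e \<subseteq> S" for e
  proof
    assume e_sub: "e \<subseteq> insert x \<sigma>"
    obtain p q where "p \<noteq> q" "e = {p, q}" using assms(1) e(1) unfolding is_graph_def by blast
    then show False
      using e e_sub \<sigma> ind[of e] by (cases "x \<in> e") (auto simp: nbhd_def insert_commute)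
  qed
  then show "\<sigma> \<in> link (Ind_induced G S) x"
    using \<sigma> assms(2) unfolding link_def Ind_induced_def by blast
qed

lemma Ind_induced_Pow: "Ind_induced G S \<subseteq> Pow S"
  by (auto simp: Ind_induced_def)

lemma finite_vertex_subset: "is_graph G \<Longrightarrow> S \<subseteq> fst G \<Longrightarrow> finite S"
  unfolding is_graph_def using finite_subset by blast

lemma ind_nonzero_iff_on:
  "finite S \<Longrightarrow> S' \<subseteq> S \<Longrightarrow> ind_nonzero k G S' j \<longleftrightarrow> red_homology_nonzero_on k S (Ind_induced G S') j"
  by (rule red_homology_nonzero_iff_on[OF _ order_trans[OF Ind_induced_Pow]]) auto

context
  fixes G :: "'a::linorder graph" and S :: "'a set" and x :: 'a
  assumes graph: "is_graph G" and S_sub: "S \<subseteq> fst G" and x_in_S: "x \<in> S"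
begin

private lemma finite_S: "finite S"
  by (rule finite_vertex_subset[OF graph S_sub])

interpretation complex_with_vertex S "Ind_induced G S" x
proof
  show "finite S" "x \<in> S" "Ind_induced G S \<subseteq> Pow S" by (fact finite_S x_in_S Ind_induced_Pow)+
  show "\<tau> \<in> Ind_induced G S" if "\<sigma> \<in> Ind_induced G S" "\<tau> \<subseteq> \<sigma>" for \<sigma> \<tau>
    using that unfolding Ind_induced_def by blast
qed

lemma ind_nonzero_deletion_or_link:
  assumes "ind_nonzero k G S j"
  shows "ind_nonzero k G (S - {x}) j \<or> (\<exists>i. j = Suc i \<and> ind_nonzero k G (S - insert x (nbhd G x)) i)"
  using red_homology_nonzero_deletion_or_link assms
  unfolding deletion_Ind_induced link_Ind_induced[OF graph x_in_S] by (simp add: ind_nonzero_iff_on[OF finite_S])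

lemma ind_nonzero_iff_deletion:
  assumes "\<And>i. \<not> ind_nonzero k G (S - insert x (nbhd G x)) i"
  shows "ind_nonzero k G S j \<longleftrightarrow> ind_nonzero k G (S - {x}) j"
proof -
  have "\<not> red_homology_nonzero_on k S (link (Ind_induced G S) x) i" for i
    using assms unfolding link_Ind_induced[OF graph x_in_S] by (simp add: ind_nonzero_iff_on[OF finite_S])
  from red_homology_nonzero_iff_deletion[OF this] show ?thesis
    unfolding deletion_Ind_induced by (simp add: ind_nonzero_iff_on[OF finite_S])
qed

lemma
  assumes "\<And>i. \<not> ind_nonzero k G (S - {x}) i"
  shows ind_nonzero_Suc_iff_link: "ind_nonzero k G S (Suc j) \<longleftrightarrow> ind_nonzero k G (S - insert x (nbhd G x)) j"
    and not_ind_nonzero_0: "\<not> ind_nonzero k G S 0"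
proof -
  have "\<not> red_homology_nonzero_on k S (deletion (Ind_induced G S) x) i" for i
    using assms unfolding deletion_Ind_induced by (simp add: ind_nonzero_iff_on[OF finite_S])
  from red_homology_nonzero_Suc_iff_link[OF this] not_red_homology_nonzero_0[OF this]
  show "ind_nonzero k G S (Suc j) \<longleftrightarrow> ind_nonzero k G (S - insert x (nbhd G x)) j"
    and "\<not> ind_nonzero k G S 0"
    unfolding link_Ind_induced[OF graph x_in_S] by (simp_all add: ind_nonzero_iff_on[OF finite_S])
qed

lemma not_ind_nonzero_isolated:
  assumes "\<And>y. y \<in> S \<Longrightarrow> y \<notin> nbhd G x"
  shows "\<not> ind_nonzero k G S j"
proof -
  have "insert x \<sigma> \<in> Ind_induced G S" if \<sigma>: "\<sigma> \<in> Ind_induced G S" for \<sigma>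
  proof -
    have "\<not> e \<subseteq> insert x \<sigma>" if e: "e \<in> snd G" "e \<subseteq> S" for e
    proof
      assume e_sub: "e \<subseteq> insert x \<sigma>"
      obtain p q where "p \<noteq> q" "e = {p, q}" using graph e(1) unfolding is_graph_def by blast
      then show False
        using e e_sub \<sigma> assms[of p] assms[of q] by (auto simp: Ind_induced_def nbhd_def insert_commute)
    qed
    then show ?thesis using \<sigma> x_in_S unfolding Ind_induced_def by blast
  qed
  then show ?thesis using not_red_homology_nonzero_cone ind_nonzero_iff_on[OF finite_S] by blast
qed

end

lemma ind_nonzero_iff_deletion_isolated:
  assumes graph: "is_graph G" and "S \<subseteq> fst G" "x \<in> S" and "y \<in> S - insert x (nbhd G x)" "S \<inter> nbhd G y \<subseteq> insert x (nbhd G x)"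
  shows "ind_nonzero k G S j \<longleftrightarrow> ind_nonzero k G (S - {x}) j"
proof (rule ind_nonzero_iff_deletion[OF assms(1-3)])
  fix i
  show "\<not> ind_nonzero k G (S - insert x (nbhd G x)) i"
    using not_ind_nonzero_isolated[OF graph _ assms(4)] assms(2,5) by blast
qed

lemma
  assumes graph: "is_graph G" and "S \<subseteq> fst G" "x \<in> S" and "y \<in> S - {x}" "S \<inter> nbhd G y \<subseteq> {x}"
  shows ind_nonzero_Suc_iff_link_isolated:
      "ind_nonzero k G S (Suc j) \<longleftrightarrow> ind_nonzero k G (S - insert x (nbhd G x)) j"
    and not_ind_nonzero_0_isolated: "\<not> ind_nonzero k G S 0"
proof -
  have "\<not> ind_nonzero k G (S - {x}) i" for i
    using not_ind_nonzero_isolated[OF graph _ assms(4)] assms(2,5) by blast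
  then show "ind_nonzero k G S (Suc j) \<longleftrightarrow> ind_nonzero k G (S - insert x (nbhd G x)) j"
    and "\<not> ind_nonzero k G S 0"
    by (rule ind_nonzero_Suc_iff_link[OF assms(1-3)], rule not_ind_nonzero_0[OF assms(1-3)])
qed

lemma ind_nonzero_le_by_vertex:
  assumes "is_graph G" "S \<subseteq> fst G" "x \<in> S"
    and "\<And>j. ind_nonzero k G (S - {x}) j \<Longrightarrow> j \<le> n"
    and "\<And>j. ind_nonzero k G (S - insert x (nbhd G x)) j \<Longrightarrow> Suc j \<le> n"
    and "ind_nonzero k G S j"
  shows "j \<le> n"
  using ind_nonzero_deletion_or_link[OF assms(1-3,6)] assms(4,5) by blast

lemma ind_nonzero_le_Suc_insert:
  assumes "is_graph G" "S \<subseteq> fst G" "S \<subseteq> insert x T"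
    and "\<And>T' j. T' \<subseteq> T \<Longrightarrow> ind_nonzero k G T' j \<Longrightarrow> j \<le> m"
    and "ind_nonzero k G S j"
  shows "j \<le> Suc m"
proof (cases "x \<in> S")
  case True
  have "S - {x} \<subseteq> T" "S - insert x (nbhd G x) \<subseteq> T" using assms(3) by auto
  then show ?thesis
    using ind_nonzero_le_by_vertex[OF assms(1,2) True _ _ assms(5)] assms(4) le_SucI by blast
next
  case False
  then have "S \<subseteq> T" using assms(3) by blast
  then show ?thesis using assms(4,5) le_SucI by blast
qed

lemma red_homology_nonzero_le_card:
  fixes k :: "'k::field itself" and K :: "'a::linorder set set"
  assumes "red_homology_nonzero k K j" "K \<subseteq> Pow S" "finite S"
  shows "j \<le> card S"
proof -
  obtain z :: "'a set \<Rightarrow> 'k" where z: "\<forall>\<sigma>. z \<sigma> \<noteq> 0 \<longrightarrow> \<sigma> \<in> faces K j"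
    and z_not_boundary: "\<not> (\<exists>c. (\<forall>\<sigma>. c \<sigma> \<noteq> 0 \<longrightarrow> \<sigma> \<in> faces K (Suc j)) \<and> bdry K c = z)"
    using assms(1) unfolding red_homology_nonzero_def by blast
  have "bdry K (\<lambda>_. 0 :: 'k) = (\<lambda>_. 0)" by (simp add: bdry_def fun_eq_iff)
  then obtain \<sigma> where "z \<sigma> \<noteq> 0" using z_not_boundary by fastforce
  then have "\<sigma> \<subseteq> S" "card \<sigma> = j" using z assms(2) by (auto simp: faces_def)
  then show ?thesis using card_mono[OF assms(3)] by blast
qed

lemma red_homology_nonzero_empty_face: "red_homology_nonzero (k :: 'k::field itself) {{} :: 'a::linorder set} 0"
proof -
  define z :: "'a set \<Rightarrow> 'k" where "z \<sigma> = (if \<sigma> = {} then 1 else 0)" for \<sigma>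
  have "bdry {{}} c {} = 0" for c :: "'a set \<Rightarrow> 'k" by (simp add: bdry_def)
  then have "\<not> (\<exists>c. (\<forall>\<sigma>. c \<sigma> \<noteq> 0 \<longrightarrow> \<sigma> \<in> faces {{}} (Suc 0)) \<and> bdry {{}} c = z)"
    by (metis z_def one_neq_zero)
  moreover have "\<forall>\<sigma>. z \<sigma> \<noteq> 0 \<longrightarrow> \<sigma> \<in> faces {{}} 0" by (simp add: z_def faces_def)
  moreover have "\<forall>\<tau>. bdry {{}} z \<tau> = 0" by (simp add: bdry_def)
  ultimately show ?thesis unfolding red_homology_nonzero_def by blast
qed

lemma finite_reg_candidates:
  assumes "finite (fst G)"
  shows "finite {j. \<exists>S \<subseteq> fst G. ind_nonzero k G S j}"
proof (rule finite_subset[of _ "{..card (fst G)}"])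
  show "{j. \<exists>S \<subseteq> fst G. ind_nonzero k G S j} \<subseteq> {..card (fst G)}"
  proof
    fix j assume "j \<in> {j. \<exists>S \<subseteq> fst G. ind_nonzero k G S j}"
    then obtain S where "S \<subseteq> fst G" "ind_nonzero k G S j" by blast
    then have "j \<le> card S"
      using red_homology_nonzero_le_card[OF _ Ind_induced_Pow] finite_subset assms by blast
    then show "j \<in> {..card (fst G)}" using card_mono[OF assms \<open>S \<subseteq> fst G\<close>] by simp
  qed
qed simp

lemma reg_ge:
  assumes "finite (fst G)" "S \<subseteq> fst G" "ind_nonzero k G S j"
  shows "j \<le> reg k G"
  unfolding reg_def using assms finite_reg_candidates[OF assms(1)] by (intro Max_ge) auto

lemma reg_attained:
  assumes "finite (fst G)" "{} \<notin> snd G"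
  obtains S where "S \<subseteq> fst G" "ind_nonzero k G S (reg k G)"
proof -
  have "Ind_induced G {} = {{}}" using assms(2) by (auto simp: Ind_induced_def)
  then have "0 \<in> {j. \<exists>S \<subseteq> fst G. ind_nonzero k G S j}"
    using red_homology_nonzero_empty_face by force
  then have "reg k G \<in> {j. \<exists>S \<subseteq> fst G. ind_nonzero k G S j}"
    unfolding reg_def using finite_reg_candidates[OF assms(1)] by (intro Max_in) auto
  then show ?thesis using that by blast
qed

section \<open>The graph containing both the subdivision and the contraction\<close>

lemma nbhd_subset: "is_graph G \<Longrightarrow> nbhd G x \<subseteq> fst G"
  unfolding nbhd_def is_graph_def by (fastforce simp: doubleton_eq_iff)

lemma not_in_nbhd_self: "is_graph G \<Longrightarrow> x \<notin> nbhd G x"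
  unfolding nbhd_def is_graph_def by (fastforce simp: doubleton_eq_iff)

locale subdivision_contraction =
  fixes G :: "'a::linorder graph" and u v a b w :: 'a
  assumes graph: "is_graph G" and edge_uv: "{u, v} \<in> snd G"
    and a_notin: "a \<notin> fst G" and b_notin: "b \<notin> fst G" and a_ne_b: "a \<noteq> b"
    and w_notin: "w \<notin> fst G" and w_ne_a: "w \<noteq> a" and w_ne_b: "w \<noteq> b"
begin

abbreviation (input) "V \<equiv> fst G"

lemma u_in: "u \<in> V" and v_in: "v \<in> V" and u_ne_v: "u \<noteq> v"
  using graph edge_uv unfolding is_graph_def by (fastforce simp: doubleton_eq_iff)+

lemma u_in_nbhd_v: "u \<in> nbhd G v" and v_in_nbhd_u: "v \<in> nbhd G u"
  using edge_uv by (auto simp: nbhd_def insert_commute)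

lemma new_vertices_distinct: "a \<noteq> u" "a \<noteq> v" "b \<noteq> u" "b \<noteq> v" "w \<noteq> u" "w \<noteq> v"
  using a_notin b_notin w_notin u_in v_in by auto

lemma new_vertices_not_in_nbhd: "a \<notin> nbhd G x" "b \<notin> nbhd G x" "w \<notin> nbhd G x"
  using nbhd_subset[OF graph] a_notin b_notin w_notin by blast+

definition merged :: "'a graph" where
  "merged = (V \<union> {a, b, w},
     snd (dsub G u v a b) \<union> {{w, z} | z. z \<in> (nbhd G u \<union> nbhd G v) - {u, v}})"

lemma is_graph_merged: "is_graph merged"
  unfolding is_graph_def
proof (intro conjI ballI)
  show "finite (fst merged)" using graph by (simp add: merged_def is_graph_def)
next
  fix e assume "e \<in> snd merged"
  then consider "e \<in> snd G" | "e = {u, a}" | "e = {a, b}" | "e = {b, v}"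
    | z where "e = {w, z}" "z \<in> nbhd G u \<union> nbhd G v"
    by (auto simp: merged_def dsub_def)
  then show "\<exists>x y. x \<noteq> y \<and> e = {x, y} \<and> x \<in> fst merged \<and> y \<in> fst merged"
  proof cases
    case 1
    then show ?thesis using graph unfolding is_graph_def merged_def by fastforce
  next
    case 5
    then have "z \<in> V" using nbhd_subset[OF graph] by blast
    then show ?thesis using 5 w_notin by (intro exI[of _ w] exI[of _ z]) (auto simp: merged_def)
  qed (use u_in v_in new_vertices_distinct a_ne_b in \<open>auto simp: merged_def\<close>)
qed

lemma Ind_dsub_merged:
  assumes "S \<subseteq> V \<union> {a, b}"
  shows "Ind_induced (dsub G u v a b) S = Ind_induced merged S"
proof (rule Ind_induced_cong)
  fix e assume "e \<subseteq> S"
  then have "w \<notin> e" using assms w_notin w_ne_a w_ne_b by blast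
  then show "e \<in> snd (dsub G u v a b) \<longleftrightarrow> e \<in> snd merged" by (auto simp: merged_def)
qed

lemma Ind_contract_merged:
  assumes "T \<subseteq> V - {u, v} \<union> {w}"
  shows "Ind_induced (contract G u v w) T = Ind_induced merged T"
proof (rule Ind_induced_cong)
  fix e assume "e \<subseteq> T"
  then have "u \<notin> e" "v \<notin> e" "a \<notin> e" "b \<notin> e"
    using assms new_vertices_distinct w_ne_a w_ne_b a_notin b_notin by auto
  then show "e \<in> snd (contract G u v w) \<longleftrightarrow> e \<in> snd merged"
    by (auto simp: merged_def contract_def dsub_def)
qed

lemma nbhd_merged:
  "nbhd merged u = nbhd G u - {v} \<union> {a}"
  "nbhd merged v = nbhd G v - {u} \<union> {b}"
  "nbhd merged a = {u, b}"
  "nbhd merged b = {a, v}"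
  "nbhd merged w = (nbhd G u \<union> nbhd G v) - {u, v}"
  using new_vertices_distinct u_ne_v a_ne_b w_ne_a w_ne_b a_notin b_notin w_notin
    not_in_nbhd_self[OF graph] new_vertices_not_in_nbhd nbhd_subset[OF graph]
  by (auto simp: merged_def dsub_def nbhd_def doubleton_eq_iff insert_commute
      dest: is_graph_edge_subset[OF graph])

lemma fst_merged: "fst merged = V \<union> {a, b, w}"
  by (simp add: merged_def)

lemma old_vertices_avoid_new:
  assumes "Y \<subseteq> V - {u, v}"
  shows "u \<notin> Y" "v \<notin> Y" "a \<notin> Y" "b \<notin> Y" "w \<notin> Y"
  using assms a_notin b_notin w_notin by auto

lemma reverse_edge: "subdivision_contraction G v u b a w"
  using graph edge_uv a_notin b_notin a_ne_b w_notin w_ne_a w_ne_b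
  by unfold_locales (auto simp: insert_commute)

lemma merged_reverse_edge: "subdivision_contraction.merged G v u b a w = merged"
  unfolding subdivision_contraction.merged_def[OF reverse_edge] merged_def dsub_def
  by (auto simp: insert_commute)

context
  fixes k :: "'k::field itself"
begin

text \<open>Within Y the vertices v and w of the merged graph have the same neighbours, so they can be
  exchanged.\<close>
lemma ind_nonzero_swap_v_w:
  assumes Y: "Y \<subseteq> V - {u, v}" "Y \<inter> nbhd G u = {}"
  shows "ind_nonzero k merged (insert v Y) j \<longleftrightarrow> ind_nonzero k merged (insert w Y) j"
proof -
  let ?S = "insert v (insert w Y)"
  note facts = old_vertices_avoid_new[OF Y(1)] new_vertices_distinct u_ne_v a_ne_b w_ne_a w_ne_b
    u_in_nbhd_v v_in_nbhd_u not_in_nbhd_self[OF graph] new_vertices_not_in_nbhd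
  have S: "?S \<subseteq> fst merged" using Y v_in by (auto simp: fst_merged)
  have "ind_nonzero k merged ?S j \<longleftrightarrow> ind_nonzero k merged (?S - {w}) j"
    by (rule ind_nonzero_iff_deletion_isolated[OF is_graph_merged S, where y = v])
      (use Y facts in \<open>auto simp: nbhd_merged\<close>)
  moreover have "ind_nonzero k merged ?S j \<longleftrightarrow> ind_nonzero k merged (?S - {v}) j"
    by (rule ind_nonzero_iff_deletion_isolated[OF is_graph_merged S, where y = w])
      (use Y facts in \<open>auto simp: nbhd_merged\<close>)
  moreover have "?S - {w} = insert v Y" "?S - {v} = insert w Y" using facts by auto
  ultimately show ?thesis by simp
qed

text \<open>Add w, then delete u and v: each time the link of the vertex has an isolated vertex.\<close>
lemma ind_nonzero_exchange_u_v_w: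
  assumes X: "X \<subseteq> V - {u, v}"
  shows "ind_nonzero k merged (X \<union> {u, v, a, b}) i \<longleftrightarrow> ind_nonzero k merged (X \<union> {a, b, w}) i"
proof -
  note facts = old_vertices_avoid_new[OF X] new_vertices_distinct u_ne_v a_ne_b w_ne_a w_ne_b
    u_in_nbhd_v v_in_nbhd_u not_in_nbhd_self[OF graph] new_vertices_not_in_nbhd nbhd_merged
  have sub: "S \<subseteq> fst merged" if "S \<subseteq> X \<union> {u, v, a, b, w}" for S
    using that X u_in v_in by (auto simp: fst_merged)
  let ?S5 = "X \<union> {u, v, a, b, w}" and ?S4 = "X \<union> {v, a, b, w}"
  let ?L5 = "X - nbhd G u - nbhd G v \<union> {u, v, a, b}" and ?L4 = "X - nbhd G u \<union> {v, b, w}"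
  have "\<not> ind_nonzero k merged ?L5 i" for i
  proof -
    have "ind_nonzero k merged ?L5 i \<longleftrightarrow> ind_nonzero k merged (?L5 - {b}) i"
      by (rule ind_nonzero_iff_deletion_isolated[OF is_graph_merged sub, where y = u]) (use facts in auto)
    moreover have "\<not> ind_nonzero k merged (?L5 - {b}) i"
      by (rule not_ind_nonzero_isolated[OF is_graph_merged sub, where x = v]) (use facts in auto)
    ultimately show ?thesis by blast
  qed
  moreover have "?S5 - insert w (nbhd merged w) = ?L5" using facts by auto
  ultimately have S5: "ind_nonzero k merged ?S5 i \<longleftrightarrow> ind_nonzero k merged (X \<union> {u, v, a, b}) i" for i
    using ind_nonzero_iff_deletion[OF is_graph_merged sub[of ?S5], of w k i] facts
    by (auto simp: insert_Diff_if)
  have "\<not> ind_nonzero k merged ?L4 i" for i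
  proof -
    have "ind_nonzero k merged ?L4 i \<longleftrightarrow> ind_nonzero k merged (?L4 - {v}) i"
      by (rule ind_nonzero_iff_deletion_isolated[OF is_graph_merged sub, where y = w]) (use facts in auto)
    moreover have "\<not> ind_nonzero k merged (?L4 - {v}) i"
      by (rule not_ind_nonzero_isolated[OF is_graph_merged sub, where x = b]) (use facts in auto)
    ultimately show ?thesis by blast
  qed
  moreover have "?S5 - insert u (nbhd merged u) = ?L4" using facts by auto
  ultimately have S4: "ind_nonzero k merged ?S5 i \<longleftrightarrow> ind_nonzero k merged ?S4 i" for i
    using ind_nonzero_iff_deletion[OF is_graph_merged sub[of ?S5], of u k i] facts
    by (auto simp: insert_Diff_if)
  have S3: "ind_nonzero k merged ?S4 i \<longleftrightarrow> ind_nonzero k merged (X \<union> {a, b, w}) i"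
    using ind_nonzero_iff_deletion_isolated[OF is_graph_merged sub[of ?S4], where x = v and y = a] facts
    by (auto simp: insert_Diff_if)
  show ?thesis using S5 S4 S3 by simp
qed

lemma ind_nonzero_full_path_shift:
  assumes X: "X \<subseteq> V - {u, v}"
  shows "ind_nonzero k merged (X \<union> {u, v, a, b}) (Suc j) \<longleftrightarrow> ind_nonzero k merged (insert w X) j"
    and "\<not> ind_nonzero k merged (X \<union> {u, v, a, b}) 0"
proof -
  note facts = old_vertices_avoid_new[OF X] new_vertices_distinct a_ne_b w_ne_a w_ne_b nbhd_merged
  have sub: "X \<union> {a, b, w} \<subseteq> fst merged" using X by (auto simp: fst_merged)
  have "ind_nonzero k merged (X \<union> {a, b, w}) (Suc j)
      \<longleftrightarrow> ind_nonzero k merged (X \<union> {a, b, w} - insert a (nbhd merged a)) j"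
    and "\<not> ind_nonzero k merged (X \<union> {a, b, w}) 0"
    using ind_nonzero_Suc_iff_link_isolated[OF is_graph_merged sub, where x = a and y = b]
      not_ind_nonzero_0_isolated[OF is_graph_merged sub, where x = a and y = b] facts
    by auto
  moreover have "X \<union> {a, b, w} - insert a (nbhd merged a) = insert w X" using facts by auto
  ultimately show "ind_nonzero k merged (X \<union> {u, v, a, b}) (Suc j) \<longleftrightarrow> ind_nonzero k merged (insert w X) j"
    and "\<not> ind_nonzero k merged (X \<union> {u, v, a, b}) 0"
    using ind_nonzero_exchange_u_v_w[OF X] by simp_all
qed

lemma ind_nonzero_lift_Suc:
  assumes T: "T \<subseteq> V - {u, v} \<union> {w}" and nz: "ind_nonzero k merged T j"
  obtains S where "S \<subseteq> V \<union> {a, b}" "ind_nonzero k merged S (Suc j)"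
proof (cases "w \<in> T")
  case True
  have X: "T - {w} \<subseteq> V - {u, v}" using T by blast
  have "ind_nonzero k merged (T - {w} \<union> {u, v, a, b}) (Suc j)"
    using ind_nonzero_full_path_shift(1)[OF X] nz True by (simp add: insert_absorb)
  moreover have "T - {w} \<union> {u, v, a, b} \<subseteq> V \<union> {a, b}" using X u_in v_in by blast
  ultimately show ?thesis using that by blast
next
  case False
  then have X: "T \<subseteq> V - {u, v}" using T by blast
  note facts = old_vertices_avoid_new[OF X] new_vertices_distinct a_ne_b nbhd_merged
  have "T \<union> {a, b} \<subseteq> fst merged" using X by (auto simp: fst_merged)
  then have "ind_nonzero k merged (T \<union> {a, b}) (Suc j) \<longleftrightarrow>
      ind_nonzero k merged (T \<union> {a, b} - insert a (nbhd merged a)) j"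
    by (rule ind_nonzero_Suc_iff_link_isolated[OF is_graph_merged, where x = a and y = b]) (use facts in auto)
  moreover have "T \<union> {a, b} - insert a (nbhd merged a) = T" using facts by auto
  ultimately have "ind_nonzero k merged (T \<union> {a, b}) (Suc j)" using nz by simp
  moreover have "T \<union> {a, b} \<subseteq> V \<union> {a, b}" using X by blast
  ultimately show ?thesis using that by blast
qed

end

context
  fixes k :: "'k::field itself" and m :: nat
  assumes contraction_bound: "\<And>T j. T \<subseteq> V - {u, v} \<union> {w} \<Longrightarrow> ind_nonzero k merged T j \<Longrightarrow> j \<le> m"
begin

lemma ind_nonzero_le_Suc_insert_bound:
  assumes "S \<subseteq> V \<union> {a, b}" "S \<subseteq> insert x (V - {u, v})" "ind_nonzero k merged S j"
  shows "j \<le> Suc m"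
proof (rule ind_nonzero_le_Suc_insert[OF is_graph_merged _ assms(2) _ assms(3)])
  show "S \<subseteq> fst merged" using assms(1) by (auto simp: fst_merged)
  show "j \<le> m" if "T \<subseteq> V - {u, v}" "ind_nonzero k merged T j" for T j
    using contraction_bound[of T j] that by blast
qed

lemma ind_nonzero_le_Suc_by_vertex:
  assumes "S \<subseteq> V \<union> {a, b}" "x \<in> S"
    and "\<And>j. ind_nonzero k merged (S - {x}) j \<Longrightarrow> j \<le> Suc m"
    and "S - insert x (nbhd merged x) \<subseteq> V - {u, v} \<union> {w}"
    and "ind_nonzero k merged S j"
  shows "j \<le> Suc m"
  by (rule ind_nonzero_le_by_vertex[OF is_graph_merged _ assms(2,3) _ assms(5)])
    (use assms(1,4) contraction_bound in \<open>auto simp: fst_merged\<close>)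

lemma ind_nonzero_le_Suc_without_u_v:
  assumes S: "S \<subseteq> V \<union> {a, b}" "u \<notin> S" "v \<notin> S" and nz: "ind_nonzero k merged S j"
  shows "j \<le> Suc m"
proof (cases "a \<in> S")
  case True
  have "S - {a} \<subseteq> V \<union> {a, b}" "S - {a} \<subseteq> insert b (V - {u, v})" using S by auto
  note deletion = ind_nonzero_le_Suc_insert_bound[OF this]
  have "S - insert a (nbhd merged a) \<subseteq> V - {u, v} \<union> {w}" using S nbhd_merged by auto
  then show ?thesis using ind_nonzero_le_Suc_by_vertex[OF S(1) True deletion] nz by blast
next
  case False
  then have "S \<subseteq> insert b (V - {u, v})" using S by auto
  then show ?thesis by (rule ind_nonzero_le_Suc_insert_bound[OF S(1) _ nz])
qed

lemma ind_nonzero_le_Suc_without_v: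
  assumes S: "S \<subseteq> V \<union> {a, b}" "v \<notin> S" and nz: "ind_nonzero k merged S j"
  shows "j \<le> Suc m"
proof -
  note facts = new_vertices_distinct a_ne_b nbhd_merged
  have S_merged: "S \<subseteq> fst merged" using S by (auto simp: fst_merged)
  consider "u \<notin> S" | "u \<in> S" "b \<notin> S" "a \<notin> S" | "u \<in> S" "b \<notin> S" "a \<in> S" | "b \<in> S" "a \<notin> S"
    | "u \<in> S" "a \<in> S" "b \<in> S" by blast
  then show ?thesis
  proof cases
    case 1
    then show ?thesis using ind_nonzero_le_Suc_without_u_v S nz by blast
  next
    case 2
    then have "S \<subseteq> insert u (V - {u, v})" using S 2 by auto
    then show ?thesis by (rule ind_nonzero_le_Suc_insert_bound[OF S(1) _ nz])
  next
    case 3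
    have "S - {a} \<subseteq> V \<union> {a, b}" "S - {a} \<subseteq> insert u (V - {u, v})" using S 3 by auto
    note deletion = ind_nonzero_le_Suc_insert_bound[OF this]
    have "S - insert a (nbhd merged a) \<subseteq> V - {u, v} \<union> {w}" using S facts 3 by auto
    then show ?thesis using ind_nonzero_le_Suc_by_vertex[OF S(1) 3(3) deletion] nz by blast
  next
    case 4
    have "\<not> ind_nonzero k merged S j"
      by (rule not_ind_nonzero_isolated[OF is_graph_merged S_merged 4(1)]) (use S(2) facts 4 in auto)
    then show ?thesis using nz by blast
  next
    case 5
    have "S - {u} \<subseteq> V \<union> {a, b}" "u \<notin> S - {u}" "v \<notin> S - {u}" using S by auto
    note deletion = ind_nonzero_le_Suc_without_u_v[OF this]
    have "\<not> ind_nonzero k merged (S - insert u (nbhd merged u)) i" for i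
      by (rule not_ind_nonzero_isolated[OF is_graph_merged _, where x = b])
        (use S_merged S(2) 5 facts new_vertices_not_in_nbhd in auto)
    then show ?thesis using ind_nonzero_le_by_vertex[OF is_graph_merged S_merged 5(1) deletion _ nz] by blast
  qed
qed

lemma ind_nonzero_le_Suc_without_u:
  assumes "S \<subseteq> V \<union> {a, b}" "u \<notin> S" "ind_nonzero k merged S j"
  shows "j \<le> Suc m"
  using subdivision_contraction.ind_nonzero_le_Suc_without_v[OF reverse_edge, of k m S j] contraction_bound assms
  unfolding merged_reverse_edge by (auto simp: insert_commute)

lemma ind_nonzero_le_Suc_without_b:
  assumes S: "S \<subseteq> V \<union> {a, b}" "b \<notin> S" and nz: "ind_nonzero k merged S j"
  shows "j \<le> Suc m"
proof (cases "u \<in> S \<and> v \<in> S")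
  case True
  define Y where "Y = S - {u, v, a} - nbhd G u"
  have Y: "Y \<subseteq> V - {u, v}" "Y \<inter> nbhd G u = {}" using S unfolding Y_def by auto
  have S_merged: "S \<subseteq> fst merged" using S by (auto simp: fst_merged)
  have "S - {u} \<subseteq> V \<union> {a, b}" "u \<notin> S - {u}" using S by auto
  note deletion = ind_nonzero_le_Suc_without_u[OF this]
  have link_eq: "S - insert u (nbhd merged u) = insert v Y"
    using S True new_vertices_distinct u_ne_v nbhd_merged new_vertices_not_in_nbhd
      not_in_nbhd_self[OF graph] unfolding Y_def by auto
  have link: "Suc i \<le> Suc m" if "ind_nonzero k merged (S - insert u (nbhd merged u)) i" for i
    using that ind_nonzero_swap_v_w[OF Y] contraction_bound[of "insert w Y" i] Y(1)
    unfolding link_eq by auto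
  have "u \<in> S" using True by blast
  from ind_nonzero_le_by_vertex[OF is_graph_merged S_merged this deletion link nz] show ?thesis .
next
  case False
  then show ?thesis using ind_nonzero_le_Suc_without_u ind_nonzero_le_Suc_without_v S nz by blast
qed

lemma ind_nonzero_le_Suc_without_a:
  assumes "S \<subseteq> V \<union> {a, b}" "a \<notin> S" "ind_nonzero k merged S j"
  shows "j \<le> Suc m"
  using subdivision_contraction.ind_nonzero_le_Suc_without_b[OF reverse_edge, of k m S j] contraction_bound assms
  unfolding merged_reverse_edge by (auto simp: insert_commute)

lemma ind_nonzero_le_Suc:
  assumes S: "S \<subseteq> V \<union> {a, b}" and nz: "ind_nonzero k merged S j"
  shows "j \<le> Suc m"
proof (cases "{u, v, a, b} \<subseteq> S")
  case True
  define X where "X = S - {u, v, a, b}"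
  have X: "X \<subseteq> V - {u, v}" using S X_def by blast
  have S_eq: "S = X \<union> {u, v, a, b}" using True X_def by blast
  obtain i where "j = Suc i" using ind_nonzero_full_path_shift(2)[OF X] nz S_eq by (cases j) auto
  then have "ind_nonzero k merged (insert w X) i"
    using ind_nonzero_full_path_shift(1)[OF X, of k i] nz S_eq by blast
  then show ?thesis using contraction_bound[of "insert w X" i] X \<open>j = Suc i\<close> by auto
next
  case False
  then consider "u \<notin> S" | "v \<notin> S" | "a \<notin> S" | "b \<notin> S" by blast
  then show ?thesis
    by cases (fact ind_nonzero_le_Suc_without_u[OF S _ nz] ind_nonzero_le_Suc_without_v[OF S _ nz]
      ind_nonzero_le_Suc_without_a[OF S _ nz] ind_nonzero_le_Suc_without_b[OF S _ nz])+
qed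

end

theorem reg_dsub_eq_Suc_reg_contract:
  "reg k (dsub G u v a b) = Suc (reg k (contract G u v w))"
proof -
  let ?D = "dsub G u v a b" and ?C = "contract G u v w"
  have D: "fst ?D = V \<union> {a, b}" "finite (fst ?D)" "{} \<notin> snd ?D"
    using graph by (auto simp: dsub_def is_graph_def)
  have C: "fst ?C = V - {u, v} \<union> {w}" "finite (fst ?C)" "{} \<notin> snd ?C"
    using graph by (auto simp: contract_def is_graph_def)
  have bound: "j \<le> reg k ?C" if "T \<subseteq> V - {u, v} \<union> {w}" "ind_nonzero k merged T j" for T j
    using reg_ge[OF C(2)] that Ind_contract_merged C(1) by metis
  obtain T where "T \<subseteq> V - {u, v} \<union> {w}" "ind_nonzero k merged T (reg k ?C)"
    using reg_attained[OF C(2,3)] Ind_contract_merged C(1) by metis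
  then obtain S where "S \<subseteq> V \<union> {a, b}" "ind_nonzero k merged S (Suc (reg k ?C))"
    by (rule ind_nonzero_lift_Suc)
  then have lower: "Suc (reg k ?C) \<le> reg k ?D"
    using reg_ge[OF D(2)] Ind_dsub_merged D(1) by metis
  obtain S' where S': "S' \<subseteq> V \<union> {a, b}" "ind_nonzero k merged S' (reg k ?D)"
    using reg_attained[OF D(2,3)] Ind_dsub_merged D(1) by metis
  have "reg k ?D \<le> Suc (reg k ?C)"
    by (rule ind_nonzero_le_Suc[where k = k, OF _ S']) (rule bound)
  with lower show ?thesis by simp
qed

end

section \<open>Invariance of regularity under order-preserving relabelling\<close>

lemma osign_image:
  assumes "strict_mono_on U h" "x \<in> A" "A \<subseteq> U"
  shows "(osign (h x) (h ` A) :: 'k::field) = osign x A"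
proof -
  have "{y \<in> h ` A. y < h x} = h ` {y \<in> A. y < x}"
    using strict_mono_on_less[OF assms(1)] assms(2,3) by blast
  moreover have "inj_on h {y \<in> A. y < x}"
    by (rule inj_on_subset[OF strict_mono_on_imp_inj_on[OF assms(1)]]) (use assms(3) in blast)
  ultimately show ?thesis unfolding osign_def by (simp add: card_image)
qed

definition push_chain :: "('a \<Rightarrow> 'b) \<Rightarrow> 'a set \<Rightarrow> ('a set \<Rightarrow> 'k::zero) \<Rightarrow> 'b set \<Rightarrow> 'k" where
  "push_chain h U c \<tau> = (if \<tau> \<subseteq> h ` U then c (inv_into U h ` \<tau>) else 0)"

lemma push_chain_outside: "\<not> \<tau> \<subseteq> h ` U \<Longrightarrow> push_chain h U c \<tau> = 0"
  by (simp add: push_chain_def)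

context
  fixes U :: "'a::linorder set" and h :: "'a \<Rightarrow> 'b::linorder"
  assumes mono: "strict_mono_on U h"
begin

private lemma inj_on_U: "inj_on h U"
  by (rule strict_mono_on_imp_inj_on[OF mono])

lemma push_chain_image: "\<sigma> \<subseteq> U \<Longrightarrow> push_chain h U c (h ` \<sigma>) = c \<sigma>"
  unfolding push_chain_def using inj_on_U by (auto simp: image_image inv_into_f_f subset_iff cong: image_cong)

lemma boundary_push_chain:
  "boundary (h ` U) (push_chain h U c) = push_chain h U (boundary U (c :: 'a set \<Rightarrow> 'k::field))"
proof
  fix \<tau>
  show "boundary (h ` U) (push_chain h U c) \<tau> = push_chain h U (boundary U c) \<tau>"
  proof (cases "\<tau> \<subseteq> h ` U")
    case False
    then show ?thesis unfolding boundary_def by (auto intro!: sum.neutral simp: push_chain_outside)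
  next
    case True
    then obtain \<sigma> where \<sigma>: "\<sigma> \<subseteq> U" "\<tau> = h ` \<sigma>" by (meson subset_imageE)
    have "h ` U - \<tau> = h ` (U - \<sigma>)" using \<sigma> inj_on_U by (simp add: inj_on_image_set_diff)
    then have "boundary (h ` U) (push_chain h U c) \<tau>
        = (\<Sum>x\<in>U - \<sigma>. osign (h x) (h ` insert x \<sigma>) * push_chain h U c (h ` insert x \<sigma>))"
      unfolding boundary_def \<sigma>(2) using inj_on_U
      by (simp add: sum.reindex inj_on_subset[of h U "U - \<sigma>"])
    also have "\<dots> = (\<Sum>x\<in>U - \<sigma>. osign x (insert x \<sigma>) * c (insert x \<sigma>))"
    proof (intro sum.cong refl)
      fix x assume "x \<in> U - \<sigma>"
      then have "insert x \<sigma> \<subseteq> U" using \<sigma>(1) by blast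
      then show "osign (h x) (h ` insert x \<sigma>) * push_chain h U c (h ` insert x \<sigma>)
          = osign x (insert x \<sigma>) * c (insert x \<sigma>)"
        by (simp only: push_chain_image osign_image[OF mono insertI1])
    qed
    also have "\<dots> = push_chain h U (boundary U c) \<tau>"
      using \<sigma> by (simp add: push_chain_image boundary_def)
    finally show ?thesis .
  qed
qed

lemma faces_image_iff:
  assumes "K \<subseteq> Pow U" "\<sigma> \<subseteq> U"
  shows "h ` \<sigma> \<in> faces ((`) h ` K) n \<longleftrightarrow> \<sigma> \<in> faces K n"
proof -
  have "h ` \<sigma> = h ` \<rho> \<longleftrightarrow> \<sigma> = \<rho>" if "\<rho> \<in> K" for \<rho>
    using that assms inj_on_U by (auto simp: inj_on_image_eq_iff)
  moreover have "card (h ` \<sigma>) = card \<sigma>" using assms(2) inj_on_U by (simp add: card_image inj_on_subset)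
  ultimately show ?thesis unfolding faces_def by auto
qed

lemma supported_push_chain:
  assumes "K \<subseteq> Pow U" "supported_on c (faces K n)"
  shows "supported_on (push_chain h U c) (faces ((`) h ` K) n)"
  unfolding supported_on_def
proof (intro allI impI)
  fix \<tau> assume nz: "push_chain h U c \<tau> \<noteq> 0"
  then obtain \<sigma> where \<sigma>: "\<sigma> \<subseteq> U" "\<tau> = h ` \<sigma>"
    using push_chain_outside by (meson subset_imageE)
  then show "\<tau> \<in> faces ((`) h ` K) n"
    using nz assms faces_image_iff[OF assms(1)] by (auto simp: push_chain_image supported_on_def)
qed

lemma push_chain_pullback:
  assumes K: "K \<subseteq> Pow U" and c': "supported_on c' (faces ((`) h ` K) n)"
  obtains c where "supported_on c (faces K n)" "push_chain h U c = c'"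
proof -
  define c where "c \<sigma> = (if \<sigma> \<subseteq> U then c' (h ` \<sigma>) else 0)" for \<sigma>
  have "supported_on c (faces K n)"
    using c' faces_image_iff[OF K] by (auto simp: supported_on_def c_def)
  moreover have "push_chain h U c = c'"
  proof
    fix \<tau>
    show "push_chain h U c \<tau> = c' \<tau>"
    proof (cases "\<tau> \<subseteq> h ` U")
      case True
      then obtain \<sigma> where "\<sigma> \<subseteq> U" "\<tau> = h ` \<sigma>" by (meson subset_imageE)
      then show ?thesis by (simp add: push_chain_image c_def)
    next
      case False
      have "c' \<tau> = 0"
      proof (rule ccontr)
        assume "c' \<tau> \<noteq> 0"
        then have "\<tau> \<in> (`) h ` K" using c' by (simp add: supported_on_def faces_def)
        then show False using K False by blast
      qed
      then show ?thesis using False by (simp add: push_chain_outside)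
    qed
  qed
  ultimately show ?thesis using that by blast
qed

lemma push_chain_boundary_cancel:
  assumes "\<And>\<sigma>. z \<sigma> \<noteq> 0 \<Longrightarrow> \<sigma> \<subseteq> U" "\<And>\<sigma>. c \<sigma> \<noteq> 0 \<Longrightarrow> \<sigma> \<subseteq> U"
    and "boundary (h ` U) (push_chain h U c) = push_chain h U (z :: 'a set \<Rightarrow> 'k::field)"
  shows "boundary U c = z"
proof
  fix \<sigma>
  show "boundary U c \<sigma> = z \<sigma>"
  proof (cases "\<sigma> \<subseteq> U")
    case True
    then show ?thesis
      using assms(3) push_chain_image[OF True] unfolding boundary_push_chain by metis
  next
    case False
    then have "c (insert y \<sigma>) = 0" for y using assms(2)[of "insert y \<sigma>"] by blast
    then have "boundary U c \<sigma> = 0" unfolding boundary_def by simp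
    then show ?thesis using assms(1) False by fastforce
  qed
qed

lemma red_homology_nonzero_image:
  fixes k :: "'k::field itself"
  assumes finite_U: "finite U" and K: "K \<subseteq> Pow U" and nz: "red_homology_nonzero k K j"
  shows "red_homology_nonzero k ((`) h ` K) j"
proof -
  have hK: "(`) h ` K \<subseteq> Pow (h ` U)" using K by auto
  obtain z :: "'a set \<Rightarrow> 'k" where z: "supported_on z (faces K j)" "boundary U z = (\<lambda>_. 0)"
    and z_not_boundary: "\<not> (\<exists>c. supported_on c (faces K (Suc j)) \<and> boundary U c = z)"
    using nz red_homology_nonzero_iff_on[OF finite_U K] unfolding red_homology_nonzero_on_def by blast
  have "\<not> (\<exists>c'. supported_on c' (faces ((`) h ` K) (Suc j)) \<and> boundary (h ` U) c' = push_chain h U z)"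
  proof
    assume "\<exists>c'. supported_on c' (faces ((`) h ` K) (Suc j)) \<and> boundary (h ` U) c' = push_chain h U z"
    then obtain c' where c': "supported_on c' (faces ((`) h ` K) (Suc j))"
      "boundary (h ` U) c' = push_chain h U z" by blast
    obtain c where c: "supported_on c (faces K (Suc j))" "push_chain h U c = c'"
      using push_chain_pullback[OF K c'(1)] .
    have "boundary U c = z"
    proof (rule push_chain_boundary_cancel)
      show "\<sigma> \<subseteq> U" if "z \<sigma> \<noteq> 0" for \<sigma>
        using z(1) K that by (auto simp: supported_on_def faces_def)
      show "\<sigma> \<subseteq> U" if "c \<sigma> \<noteq> 0" for \<sigma>
        using c(1) K that by (auto simp: supported_on_def faces_def)
      show "boundary (h ` U) (push_chain h U c) = push_chain h U z" using c(2) c'(2) by simp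
    qed
    then show False using z_not_boundary c(1) by blast
  qed
  moreover have "boundary (h ` U) (push_chain h U z) = (\<lambda>_. 0)"
    by (simp add: boundary_push_chain z(2) push_chain_def fun_eq_iff)
  ultimately have "red_homology_nonzero_on k (h ` U) ((`) h ` K) j"
    using supported_push_chain[OF K z(1)] unfolding red_homology_nonzero_on_def by blast
  then show ?thesis using red_homology_nonzero_iff_on[OF finite_imageI[OF finite_U] hK] by blast
qed

end

lemma strict_mono_on_inv_into:
  fixes f :: "'a::linorder \<Rightarrow> 'b::linorder"
  assumes "strict_mono_on A f"
  shows "strict_mono_on (f ` A) (inv_into A f)"
proof (rule strict_mono_onI)
  fix x' y' assume "x' \<in> f ` A" "y' \<in> f ` A" "x' < y'"
  then obtain x y where "x \<in> A" "y \<in> A" "x' = f x" "y' = f y" "f x < f y" by blast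
  then show "inv_into A f x' < inv_into A f y'"
    using strict_mono_on_less[OF assms] strict_mono_on_imp_inj_on[OF assms] by simp
qed

definition map_graph :: "('a \<Rightarrow> 'b) \<Rightarrow> 'a graph \<Rightarrow> 'b graph" where
  "map_graph h H = (h ` fst H, (`) h ` snd H)"

lemma Ind_induced_map_graph:
  assumes inj: "inj_on h (fst H)" and edges: "\<forall>e \<in> snd H. e \<subseteq> fst H" and S: "S \<subseteq> fst H"
  shows "Ind_induced (map_graph h H) (h ` S) = (`) h ` Ind_induced H S"
proof -
  have image_subset_iff: "h ` A \<subseteq> h ` B \<longleftrightarrow> A \<subseteq> B" if "A \<subseteq> fst H" "B \<subseteq> fst H" for A B
    using inj_on_image_mem_iff[OF inj _ that(2)] that(1) by blast
  show ?thesis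
  proof (intro set_eqI iffI)
    fix T' assume T': "T' \<in> Ind_induced (map_graph h H) (h ` S)"
    then obtain T where T: "T \<subseteq> S" "T' = h ` T"
      by (auto simp: Ind_induced_def map_graph_def subset_image_iff)
    have "T \<in> Ind_induced H S"
      using T' T S edges image_subset_iff
      unfolding Ind_induced_def map_graph_def by (auto 0 3)
    then show "T' \<in> (`) h ` Ind_induced H S" using T by blast
  next
    fix T' assume "T' \<in> (`) h ` Ind_induced H S"
    then obtain T where T: "T' = h ` T" "T \<in> Ind_induced H S" by blast
    then show "T' \<in> Ind_induced (map_graph h H) (h ` S)"
      using S edges image_subset_iff unfolding Ind_induced_def map_graph_def by (auto 0 3)
  qed
qed

lemma reg_map_graph:
  assumes graph: "is_graph H" and mono: "strict_mono_on (fst H) h"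
  shows "reg k (map_graph h H) = reg k H"
proof -
  have fin: "finite (fst H)" and edges: "\<forall>e \<in> snd H. e \<subseteq> fst H"
    using graph is_graph_edge_subset by (auto simp: is_graph_def)
  let ?V = "fst H" and ?g = "inv_into (fst H) h"
  have inj: "inj_on h ?V" by (rule strict_mono_on_imp_inj_on[OF mono])
  have Ind_Pow: "Ind_induced H S \<subseteq> Pow ?V" if "S \<subseteq> ?V" for S
    using that by (auto simp: Ind_induced_def)
  have "ind_nonzero k (map_graph h H) (h ` S) j \<longleftrightarrow> ind_nonzero k H S j" if S: "S \<subseteq> ?V" for S j
  proof
    assume "ind_nonzero k (map_graph h H) (h ` S) j"
    moreover have "(`) h ` Ind_induced H S \<subseteq> Pow (h ` ?V)" using Ind_Pow[OF S] by blast
    ultimately have "red_homology_nonzero k ((`) ?g ` (`) h ` Ind_induced H S) j"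
      using red_homology_nonzero_image[OF strict_mono_on_inv_into[OF mono] finite_imageI[OF fin]]
      unfolding Ind_induced_map_graph[OF inj edges S] by blast
    moreover have "(`) ?g ` (`) h ` Ind_induced H S = Ind_induced H S"
      using Ind_Pow[OF S] inj by (force simp: image_image inv_into_f_f subset_iff cong: image_cong)
    ultimately show "ind_nonzero k H S j" by simp
  next
    assume "ind_nonzero k H S j"
    then show "ind_nonzero k (map_graph h H) (h ` S) j"
      using red_homology_nonzero_image[OF mono fin Ind_Pow[OF S]] Ind_induced_map_graph[OF inj edges S]
      by simp
  qed
  then have "{j. \<exists>S' \<subseteq> fst (map_graph h H). ind_nonzero k (map_graph h H) S' j}
      = {j. \<exists>S \<subseteq> ?V. ind_nonzero k H S j}"
    unfolding map_graph_def fst_conv subset_image_iff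
    by (metis (no_types, lifting) Collect_cong map_graph_def)
  then show ?thesis by (simp add: reg_def)
qed

lemma is_graph_map_graph:
  assumes "is_graph G" "inj_on h (fst G)"
  shows "is_graph (map_graph h G)"
  unfolding is_graph_def map_graph_def
proof (intro conjI ballI)
  show "finite (fst (h ` fst G, (`) h ` snd G))" using assms(1) by (simp add: is_graph_def)
next
  fix e' assume "e' \<in> snd (h ` fst G, (`) h ` snd G)"
  then obtain x y where "x \<noteq> y" "e' = h ` {x, y}" "x \<in> fst G" "y \<in> fst G"
    using assms(1) unfolding is_graph_def by auto
  then show "\<exists>x y. x \<noteq> y \<and> e' = {x, y} \<and> x \<in> fst (h ` fst G, (`) h ` snd G) \<and> y \<in> fst (h ` fst G, (`) h ` snd G)"
    using assms(2) by (intro exI[of _ "h x"] exI[of _ "h y"]) (auto simp: inj_on_eq_iff)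
qed

lemma map_graph_dsub:
  assumes "inj h"
  shows "map_graph h (dsub G u v a b) = dsub (map_graph h G) (h u) (h v) (h a) (h b)"
proof -
  have "inj ((`) h)" using assms by (simp add: inj_def inj_image_eq_iff)
  then show ?thesis by (simp add: map_graph_def dsub_def image_Un image_set_diff)
qed

lemma nbhd_map_graph:
  assumes "inj h"
  shows "nbhd (map_graph h G) (h x) = h ` nbhd G x"
proof (intro set_eqI iffI)
  fix z' assume "z' \<in> nbhd (map_graph h G) (h x)"
  then obtain e where e: "e \<in> snd G" "{h x, z'} = h ` e" by (auto simp: nbhd_def map_graph_def)
  then obtain z where z: "z \<in> e" "z' = h z" by (metis imageE insertCI)
  then have "h ` {x, z} = h ` e" using e(2) by simp
  then have "{x, z} = e" by (simp only: inj_image_eq_iff[OF assms])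
  then show "z' \<in> h ` nbhd G x" using e(1) z(2) by (auto simp: nbhd_def)
next
  fix z' assume "z' \<in> h ` nbhd G x"
  then obtain z where z: "{x, z} \<in> snd G" "z' = h z" by (auto simp: nbhd_def)
  have "h ` {x, z} \<in> snd (map_graph h G)" using z(1) unfolding map_graph_def snd_conv by (rule imageI)
  then show "z' \<in> nbhd (map_graph h G) (h x)" using z(2) by (simp add: nbhd_def)
qed

lemma map_graph_contract:
  assumes graph: "is_graph G" and inj: "inj f" and agree: "\<And>x. x \<in> fst G \<Longrightarrow> g x = f x"
  shows "map_graph g (contract G u v w) = contract (map_graph f G) (f u) (f v) (g w)"
proof -
  have edge_image: "g ` e = f ` e" if "e \<in> snd G" for e
    using agree is_graph_edge_subset[OF graph that] by (intro image_cong) auto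
  let ?A = "nbhd G u \<union> nbhd G v - {u, v}"
  have "?A \<subseteq> fst G" using nbhd_subset[OF graph] by blast
  then have "(`) g ` {{w, z} | z. z \<in> ?A} = {{g w, z'} | z'. z' \<in> f ` ?A}"
    unfolding Setcompr_eq_image image_image using agree by (intro image_cong refl) auto
  also have "f ` ?A = nbhd (map_graph f G) (f u) \<union> nbhd (map_graph f G) (f v) - {f u, f v}"
    by (simp add: nbhd_map_graph[OF inj] image_Un image_set_diff[OF inj])
  finally have new_edges: "(`) g ` {{w, z} | z. z \<in> ?A}
      = {{g w, z'} | z'. z' \<in> nbhd (map_graph f G) (f u) \<union> nbhd (map_graph f G) (f v) - {f u, f v}}" .
  have "(`) g ` {e \<in> snd G. u \<notin> e \<and> v \<notin> e} = (`) f ` {e \<in> snd G. u \<notin> e \<and> v \<notin> e}"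
    by (rule image_cong[OF refl], rule edge_image) blast
  also have "\<dots> = {e' \<in> (`) f ` snd G. f u \<notin> e' \<and> f v \<notin> e'}"
    using inj by (auto simp: inj_image_mem_iff inj_eq)
  finally have old_edges: "(`) g ` {e \<in> snd G. u \<notin> e \<and> v \<notin> e} = {e' \<in> (`) f ` snd G. f u \<notin> e' \<and> f v \<notin> e'}" .
  have "g ` (fst G - {u, v} \<union> {w}) = f ` fst G - {f u, f v} \<union> {g w}"
    using agree inj by (auto simp: inj_eq image_iff)
  with old_edges new_edges show ?thesis by (simp add: map_graph_def contract_def image_Un)
qed

lemma is_graph_dsub:
  assumes "is_graph G" "{u, v} \<in> snd G" "a \<notin> fst G" "b \<notin> fst G" "a \<noteq> b"
  shows "is_graph (dsub G u v a b)"
proof -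
  have "u \<in> fst G" "v \<in> fst G" using is_graph_edge_subset[OF assms(1,2)] by auto
  then show ?thesis
    using assms unfolding is_graph_def dsub_def by (auto 0 4)
qed

lemma is_graph_contract:
  assumes "is_graph G" "w \<notin> fst G"
  shows "is_graph (contract G u v w)"
  unfolding is_graph_def
proof (intro conjI ballI)
  show "finite (fst (contract G u v w))" using assms(1) by (simp add: contract_def is_graph_def)
next
  fix e assume "e \<in> snd (contract G u v w)"
  then consider "e \<in> snd G" "u \<notin> e" "v \<notin> e" | z where "e = {w, z}" "z \<in> nbhd G u \<union> nbhd G v - {u, v}"
    by (auto simp: contract_def)
  then show "\<exists>x y. x \<noteq> y \<and> e = {x, y} \<and> x \<in> fst (contract G u v w) \<and> y \<in> fst (contract G u v w)"
  proof cases
    case 1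
    then show ?thesis using assms(1) unfolding is_graph_def contract_def by fastforce
  next
    case 2
    then have "z \<in> fst G - {u, v}" using nbhd_subset[OF assms(1)] by blast
    then show ?thesis using 2 assms(2) by (intro exI[of _ w] exI[of _ z]) (auto simp: contract_def)
  qed
qed

theorem mainTheorem18:
  fixes G :: "'a::linorder graph" and u v a b w :: 'a
  assumes "is_graph G"
    and "{u, v} \<in> snd G"
    and "a \<notin> fst G" and "b \<notin> fst G" and "a \<noteq> b"
    and "w \<notin> fst G"
  shows "reg TYPE('k::field) (dsub G u v a b) = reg TYPE('k) (contract G u v w) + 1"
proof -
  \<comment> \<open>w may coincide with a or b; after relabelling, (w, True) is a genuinely new vertex.\<close>
  define f :: "'a \<Rightarrow> 'a \<times> bool" where "f x = (x, False)" for x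
  define g :: "'a \<Rightarrow> 'a \<times> bool" where "g x = (x, x = w)" for x
  have mono: "strict_mono_on A f" "strict_mono_on A g" for A
    by (auto intro!: strict_mono_onI simp: f_def g_def less_prod_def)
  have inj: "inj f" by (auto intro: injI simp: f_def)
  have agree: "g x = f x" if "x \<in> fst G" for x using that assms(6) by (auto simp: f_def g_def)
  have "f ` {u, v} \<in> snd (map_graph f G)" using assms(2) unfolding map_graph_def snd_conv by (rule imageI)
  then have merged: "subdivision_contraction (map_graph f G) (f u) (f v) (f a) (f b) (g w)"
    using assms is_graph_map_graph[OF assms(1) inj_on_subset[OF inj]]
    by unfold_locales (auto simp: map_graph_def f_def g_def)
  have "reg TYPE('k) (dsub G u v a b) = reg TYPE('k) (dsub (map_graph f G) (f u) (f v) (f a) (f b))"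
    unfolding map_graph_dsub[OF inj, symmetric]
    by (rule reg_map_graph[OF is_graph_dsub[OF assms(1-5)] mono(1), symmetric])
  also have "\<dots> = Suc (reg TYPE('k) (contract (map_graph f G) (f u) (f v) (g w)))"
    by (rule subdivision_contraction.reg_dsub_eq_Suc_reg_contract[OF merged])
  also have "contract (map_graph f G) (f u) (f v) (g w) = map_graph g (contract G u v w)"
    by (rule map_graph_contract[OF assms(1) inj agree, symmetric])
  also have "reg TYPE('k) (map_graph g (contract G u v w)) = reg TYPE('k) (contract G u v w)"
    by (rule reg_map_graph[OF is_graph_contract[OF assms(1,6)] mono(2)])
  finally show ?thesis by simp
qed

end
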